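(* Let $\gamma,\kappa\ge2$, memory $m\ge0$, coupling length $L\ge m+1$ and lifting degree $Z\ge1$; use uniform random edge-spreading over $\{0,\ldots,m\}$ and uniform random lifting on the $\gamma\times\kappa$ fully-connected base graph. Let $\Delta=(2\gamma-3)(2\kappa-3)$, $I=\frac{(\Delta-1)^{\Delta-1}}{\Delta^{\Delta}}$, $II=\frac{27}{256(\gamma\kappa-\gamma-\kappa)}$, and suppose $\frac{2m^2+4m+3}{3(m+1)^3Z}\le\max\{I,II\}$. Then the Moser–Tardos algorithm (described in the context), run on the events "$c$ is active", $c\in\mathcal{C}_4$, terminates with probability one and outputs a QC-SC-LDPC code with no active 4-cycle candidate, and the expected numbers $\mathbb{E}[c_i]$ of times each event $c_i$ is resampled by RESAMPLE satisfy $$\sum_{c_i\in\mathcal{C}_4}\mathbb{E}[c_i]\le\begin{cases}\frac{\binom{\gamma}{2}\binom{\kappa}{2}}{(2\gamma-3)(2\kappa-3)-2}, & \text{if } I>II,\\[2pt] \frac{\binom{\gamma}{2}\binom{\kappa}{2}}{3(\gamma\kappa-\gamma-\kappa)-1}, & \text{otherwise.}\end{cases}$$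
   Context: The base graph has check nodes $[\gamma]$, variable nodes $[\kappa]$, edges $[\gamma]\times[\kappa]$ (all-one base matrix). The code is given by a partition matrix $\mathbf{P}\in\{0,\ldots,m\}^{\gamma\times\kappa}$ (edge $(i,j)$ placed in component matrix $\mathbf{H}_{\mathbf{P}(i,j)}$) and lifting matrix $\mathbf{L}\in\{0,\ldots,Z-1\}^{\gamma\times\kappa}$ (entry replaced by circulant $\sigma^{\mathbf{L}(i,j)}$); randomly all entries are independent, $\mathbf{P}$ entries uniform on $\{0,\ldots,m\}$, $\mathbf{L}$ entries uniform on $\{0,\ldots,Z-1\}$. Each edge $e$ carries variable $X_e=(\mathbf{P}(e),\mathbf{L}(e))$. $\mathcal{C}_4$ (ordered in a fixed way) is the set of 4-cycle candidates $(j_1,i_1,j_2,i_2)$, $i_1\ne i_2$, $j_1\ne j_2$, whose edge set $\mathrm{sc}(c)$ is $\{(i_1,j_1),(i_1,j_2),(i_2,j_1),(i_2,j_2)\}$; $c$ is active iff $\mathbf{P}(i_1,j_1)+\mathbf{P}(i_2,j_2)=\mathbf{P}(i_1,j_2)+\mathbf{P}(i_2,j_1)$ and $\mathbf{L}(i_1,j_1)+\mathbf{L}(i_2,j_2)\equiv\mathbf{L}(i_1,j_2)+\mathbf{L}(i_2,j_1)\pmod Z$. Moser–Tardos algorithm: sample all variables; while some event is active, call RESAMPLE on the least-indexed active one; output the assignment. RESAMPLE$(c)$: resample the variables in $\mathrm{sc}(c)$; then while there is a least-indexed active $c'$ with $\mathrm{sc}(c)\cap\mathrm{sc}(c')\ne\emptyset$,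 call RESAMPLE$(c')$. *)

theory Defs
  imports "HOL-Probability.Probability"
begin

(* An edge of the all-one gamma x kappa base graph: (row i, column j). *)
type_synonym edge = "nat \<times> nat"
(* The value X_e = (P(e), L(e)) carried by an edge. *)
type_synonym val = "nat \<times> nat"
type_synonym cand = "nat \<times> nat \<times> nat \<times> nat"

(* C_4: each 4-cycle of the base graph represented once (i1 < i2, j1 < j2). *)
definition C4 :: "nat \<Rightarrow> nat \<Rightarrow> cand set" where
  "C4 \<gamma> \<kappa> = {(j1, i1, j2, i2). i1 < i2 \<and> i2 < \<gamma> \<and> j1 < j2 \<and> j2 < \<kappa>}"

definition sc :: "cand \<Rightarrow> edge set" where
  "sc c = (case c of (j1, i1, j2, i2) \<Rightarrow> {(i1, j1), (i1, j2), (i2, j1), (i2, j2)})"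

definition active :: "nat \<Rightarrow> (edge \<Rightarrow> val) \<Rightarrow> cand \<Rightarrow> bool" where
  "active Z X c = (case c of (j1, i1, j2, i2) \<Rightarrow>
      fst (X (i1, j1)) + fst (X (i2, j2)) = fst (X (i1, j2)) + fst (X (i2, j1)) \<and>
      (snd (X (i1, j1)) + snd (X (i2, j2))) mod Z = (snd (X (i1, j2)) + snd (X (i2, j1))) mod Z)"

(* Resampling-table semantics of Moser--Tardos:
   omega (e, k) is the k-th sample drawn for variable e (k = 0 is the initial sample).
   A counter cnt e records how many times e has been resampled so far. *)
definition assign :: "(edge \<times> nat \<Rightarrow> val) \<Rightarrow> (edge \<Rightarrow> nat) \<Rightarrow> edge \<Rightarrow> val" where
  "assign \<omega> cnt = (\<lambda>e. \<omega> (e, cnt e))"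

definition bump :: "(edge \<Rightarrow> nat) \<Rightarrow> cand \<Rightarrow> edge \<Rightarrow> nat" where
  "bump cnt c = (\<lambda>e. if e \<in> sc c then Suc (cnt e) else cnt e)"

(* The state is (counters, call stack of RESAMPLE frames).
   cs is the fixed ordering of C_4 (least index = first in the list).
   Empty stack: main loop; call RESAMPLE on least-indexed active event (if any).
   Top frame c: RESAMPLE(c)'s while loop: call RESAMPLE on the least-indexed active c'
   with sc c \<inter> sc c' \<noteq> {}, or return.
   The second component is Some c' iff this step performs a call RESAMPLE(c'). *)
definition mt_step :: "nat \<Rightarrow> cand list \<Rightarrow> (edge \<times> nat \<Rightarrow> val) \<Rightarrow>
    (edge \<Rightarrow> nat) \<times> cand list \<Rightarrow> ((edge \<Rightarrow> nat) \<times> cand list) \<times> cand option" where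
  "mt_step Z cs \<omega> st = (case st of (cnt, stk) \<Rightarrow>
     (case stk of
        [] \<Rightarrow> (case find (active Z (assign \<omega> cnt)) cs of
                 None \<Rightarrow> ((cnt, []), None)
               | Some c \<Rightarrow> ((bump cnt c, [c]), Some c))
      | c # rest \<Rightarrow> (case find (\<lambda>c'. active Z (assign \<omega> cnt) c' \<and> sc c \<inter> sc c' \<noteq> {}) cs of
                 None \<Rightarrow> ((cnt, rest), None)
               | Some c' \<Rightarrow> ((bump cnt c', c' # c # rest), Some c'))))"

definition mt_state :: "nat \<Rightarrow> cand list \<Rightarrow> (edge \<times> nat \<Rightarrow> val) \<Rightarrow> nat \<Rightarrow>
    (edge \<Rightarrow> nat) \<times> cand list" where
  "mt_state Z cs \<omega> n = ((\<lambda>st. fst (mt_step Z cs \<omega> st)) ^^ n) (\<lambda>_. 0, [])"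

definition mt_halted :: "nat \<Rightarrow> cand list \<Rightarrow> (edge \<times> nat \<Rightarrow> val) \<Rightarrow> nat \<Rightarrow> bool" where
  "mt_halted Z cs \<omega> n = (snd (mt_state Z cs \<omega> n) = [] \<and>
      (\<forall>c\<in>set cs. \<not> active Z (assign \<omega> (fst (mt_state Z cs \<omega> n))) c))"

definition mt_terminates :: "nat \<Rightarrow> cand list \<Rightarrow> (edge \<times> nat \<Rightarrow> val) \<Rightarrow> bool" where
  "mt_terminates Z cs \<omega> = (\<exists>n. mt_halted Z cs \<omega> n)"

definition mt_output :: "nat \<Rightarrow> cand list \<Rightarrow> (edge \<times> nat \<Rightarrow> val) \<Rightarrow> edge \<Rightarrow> val" where
  "mt_output Z cs \<omega> = assign \<omega> (fst (mt_state Z cs \<omega> (LEAST n. mt_halted Z cs \<omega> n)))"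

definition resample_count :: "nat \<Rightarrow> cand list \<Rightarrow> (edge \<times> nat \<Rightarrow> val) \<Rightarrow> cand \<Rightarrow> ennreal" where
  "resample_count Z cs \<omega> c =
     (\<Sum>n. if snd (mt_step Z cs \<omega> (mt_state Z cs \<omega> n)) = Some c then 1 else 0)"

definition table_space :: "nat \<Rightarrow> nat \<Rightarrow> (edge \<times> nat \<Rightarrow> val) measure" where
  "table_space m Z = PiM UNIV (\<lambda>_. measure_pmf (pmf_of_set ({0..m} \<times> {0..<Z})))"

end

theory Submission
  imports Defs
begin

text \<open>The analysis follows Kolipaka and Szegedy in the resampling-table model, where the \<open>k\<close>-th
  sample of every edge is drawn in advance. Each call \<open>RESAMPLE(A)\<close> is explained by its witness:
  the earlier calls linked to it by chains of increasing, pairwise dependent calls, layered by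
  the length of the longest such chain. The witness is a stable set sequence starting with
  \<open>{A}\<close>, distinct calls of \<open>A\<close> have distinct witnesses, and the nodes of a witness read
  pairwise distinct samples, so the witness occurs with probability at most \<open>p\<^sup>n\<close>, where \<open>n\<close> is
  its size and \<open>p\<close> the probability that a single candidate is active. A cluster-expansion
  condition \<open>p\<^bsup>|I|\<^esup> \<Sum>\<^sub>L \<mu>\<^bsup>|L|\<^esup> \<le> \<mu>\<^bsup>|I|\<^esup>\<close> then bounds the expected number of calls of
  \<open>A\<close> by \<open>\<mu>\<close>, and finiteness of this expectation gives termination almost surely.

  The condition holds for \<open>\<mu> = 1/(\<Delta> - 1)\<close> because every candidate shares an edge with at
  most \<open>\<Delta> = (2\<gamma> - 3)(2\<kappa> - 3)\<close> candidates, and for \<open>\<mu> = 1/(3(\<gamma>\<kappa> - \<gamma> - \<kappa>))\<close> by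
  charging each candidate of a layer to its lexicographically first edge shared with the
  previous layer. Finally \<open>p \<le> (2m\<^sup>2 + 4m + 3)/(3(m + 1)\<^sup>3Z)\<close>: the partition values of an
  active candidate solve \<open>a + d = b + c\<close> in \<open>{0..m}\<close>, and its last lifting value is
  determined by the other three.\<close>

definition neighbourhood :: "cand set \<Rightarrow> cand set" where
  "neighbourhood I = {B. \<exists>B'\<in>I. sc B \<inter> sc B' \<noteq> {}}"

text \<open>The empty layer is included; it contributes the summand \<open>1\<close> of the cluster criterion.\<close>

definition next_layers :: "cand set \<Rightarrow> cand set \<Rightarrow> cand set set" where
  "next_layers U I = {L. L \<subseteq> U \<inter> neighbourhood I \<and> disjoint_family_on sc L}"

fun stable_seq :: "cand set \<Rightarrow> cand set \<Rightarrow> cand set list \<Rightarrow> bool" where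
  "stable_seq U I [] = True"
| "stable_seq U I (L # Ls) \<longleftrightarrow> L \<noteq> {} \<and> L \<in> next_layers U I \<and> stable_seq U L Ls"

text \<open>A node in layer \<open>i\<close> of a stable sequence reads, at edge \<open>e\<close>, the sample following those
  read by the deeper layers.\<close>

definition sample_index :: "cand set list \<Rightarrow> nat \<Rightarrow> edge \<Rightarrow> nat" where
  "sample_index \<sigma> i e = (\<Sum>j\<in>{Suc i..<length \<sigma>}. card {B\<in>\<sigma>!j. e \<in> sc B})"

definition witness_event :: "nat \<Rightarrow> cand set list \<Rightarrow> (edge \<times> nat \<Rightarrow> val) set" where
  "witness_event Z \<sigma> = {\<omega>. \<forall>i<length \<sigma>. \<forall>B\<in>\<sigma>!i. active Z (\<lambda>e. \<omega> (e, sample_index \<sigma> i e)) B}"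

lemma sc_nonempty: "sc B \<noteq> {}"
  by (cases B) (auto simp: sc_def)

lemma finite_sc: "finite (sc B)"
  by (cases B) (simp add: sc_def)

lemma active_cong:
  assumes "\<And>e. e \<in> sc c \<Longrightarrow> X e = Y e"
  shows "active Z X c = active Z Y c"
  using assms by (cases c) (simp add: active_def sc_def)

lemma stable_seq_layers:
  "stable_seq U I Ls \<Longrightarrow> L \<in> set Ls \<Longrightarrow> L \<subseteq> U \<and> disjoint_family_on sc L"
  by (induction Ls arbitrary: I) (auto simp: next_layers_def)

subsection \<open>Witness layers of a run\<close>

definition resample_counts :: "(nat \<Rightarrow> cand option) \<Rightarrow> nat \<Rightarrow> edge \<Rightarrow> nat" where
  "resample_counts call n e = card {s. s < n \<and> (\<exists>c. call s = Some c \<and> e \<in> sc c)}"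

definition witness_rel :: "(nat \<Rightarrow> cand option) \<Rightarrow> nat \<Rightarrow> (nat \<times> nat) set" where
  "witness_rel call t = {(s, s'). s < s' \<and> s' \<le> t \<and> call s \<noteq> None \<and> call s' \<noteq> None \<and>
      sc (the (call s)) \<inter> sc (the (call s')) \<noteq> {}}"

definition in_witness :: "(nat \<Rightarrow> cand option) \<Rightarrow> nat \<Rightarrow> nat \<Rightarrow> bool" where
  "in_witness call t s \<longleftrightarrow> (\<exists>k. (s, t) \<in> witness_rel call t ^^ k)"

definition depth :: "(nat \<Rightarrow> cand option) \<Rightarrow> nat \<Rightarrow> nat \<Rightarrow> nat" where
  "depth call t s = (GREATEST k. (s, t) \<in> witness_rel call t ^^ k)"

definition layer :: "(nat \<Rightarrow> cand option) \<Rightarrow> nat \<Rightarrow> nat \<Rightarrow> cand set" where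
  "layer call t i = (\<lambda>s. the (call s)) ` {s. in_witness call t s \<and> depth call t s = i}"

definition max_depth :: "(nat \<Rightarrow> cand option) \<Rightarrow> nat \<Rightarrow> nat" where
  "max_depth call t = Max (depth call t ` {s. in_witness call t s})"

definition witness :: "(nat \<Rightarrow> cand option) \<Rightarrow> nat \<Rightarrow> cand set list" where
  "witness call t = map (layer call t) [0..<Suc (max_depth call t)]"

context
  fixes call :: "nat \<Rightarrow> cand option" and t :: nat and A :: cand
  assumes call_t: "call t = Some A"
begin

private abbreviation "R \<equiv> witness_rel call t"

lemma witness_rel_intro:
  "s < s' \<Longrightarrow> s' \<le> t \<Longrightarrow> call s = Some B \<Longrightarrow> call s' = Some B' \<Longrightarrow> sc B \<inter> sc B' \<noteq> {} \<Longrightarrow>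
    (s, s') \<in> R"
  unfolding witness_rel_def by simp (metis prod_cases4)

lemma witness_relpow_D:
  "(s, s') \<in> R ^^ k \<Longrightarrow> s + k \<le> s' \<and> (k = 0 \<longrightarrow> s = s') \<and> (k > 0 \<longrightarrow> s' \<le> t \<and> call s \<noteq> None)"
proof (induction k arbitrary: s')
  case (Suc k)
  then obtain s'' where s'': "(s, s'') \<in> R ^^ k" "(s'', s') \<in> R" by auto
  from Suc.IH[OF s''(1)] s''(2) show ?case by (cases k) (auto simp: witness_rel_def)
qed simp

lemma depth_path: "in_witness call t s \<Longrightarrow> (s, t) \<in> R ^^ depth call t s"
  unfolding in_witness_def depth_def
  by (elim exE, rule GreatestI_nat[where b = "t - s"]) (auto dest: witness_relpow_D)

lemma depth_ge: "(s, t) \<in> R ^^ k \<Longrightarrow> k \<le> depth call t s"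
  unfolding depth_def by (rule Greatest_le_nat[where b = "t - s"]) (auto dest: witness_relpow_D)

lemma in_witness_root: "in_witness call t t"
  unfolding in_witness_def by (rule exI[of _ 0]) simp

lemma depth_root: "depth call t t = 0"
  using depth_path[OF in_witness_root] witness_relpow_D by fastforce

lemma in_witness_le: "in_witness call t s \<Longrightarrow> s \<le> t"
  unfolding in_witness_def using witness_relpow_D by fastforce

lemma in_witness_pred:
  assumes "(s, s') \<in> R" "in_witness call t s'"
  shows "in_witness call t s \<and> depth call t s' < depth call t s"
proof -
  have path: "(s, t) \<in> R ^^ Suc (depth call t s')"
    using relpow_Suc_I2[OF assms(1) depth_path[OF assms(2)]] .
  then show ?thesis unfolding in_witness_def using depth_ge[OF path] Suc_le_eq by blast
qed

lemma in_witness_succ: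
  assumes "in_witness call t s" "s \<noteq> t"
  obtains s' where "(s, s') \<in> R" "in_witness call t s'" "depth call t s = Suc (depth call t s')"
proof -
  have p: "(s, t) \<in> R ^^ depth call t s" by (rule depth_path[OF assms(1)])
  have "depth call t s \<noteq> 0"
  proof
    assume "depth call t s = 0"
    with p assms(2) show False by simp
  qed
  then obtain k where k: "depth call t s = Suc k" using not0_implies_Suc by blast
  with p obtain s' where s': "(s, s') \<in> R" "(s', t) \<in> R ^^ k" by (metis relpow_Suc_D2)
  then have s'_in: "in_witness call t s'" unfolding in_witness_def by blast
  moreover have "depth call t s = Suc (depth call t s')"
    using depth_ge[OF s'(2)] conjunct2[OF in_witness_pred[OF s'(1) s'_in]] k by linarith
  ultimately show thesis using that s'(1) by blast
qed

lemma depth_eq_0_iff: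
  assumes "in_witness call t s"
  shows "depth call t s = 0 \<longleftrightarrow> s = t"
proof
  assume "depth call t s = 0"
  show "s = t"
  proof (rule ccontr)
    assume "s \<noteq> t"
    with assms obtain s' where "depth call t s = Suc (depth call t s')" by (rule in_witness_succ)
    with \<open>depth call t s = 0\<close> show False by simp
  qed
qed (simp add: depth_root)

lemma in_witness_call:
  assumes "in_witness call t s"
  obtains B where "call s = Some B"
proof (cases "s = t")
  case False
  with assms obtain s' where "(s, s') \<in> R" by (rule in_witness_succ)
  then show thesis using that by (auto simp: witness_rel_def)
qed (use call_t that in simp)

text \<open>Calls of equal depth are independent: otherwise the earlier one would lie strictly deeper.\<close>

lemma same_depth_disjoint:
  assumes "in_witness call t s1" "in_witness call t s2" "s1 \<noteq> s2"
    and "depth call t s1 = depth call t s2"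
  shows "sc (the (call s1)) \<inter> sc (the (call s2)) = {}"
proof (rule ccontr)
  assume meet: "sc (the (call s1)) \<inter> sc (the (call s2)) \<noteq> {}"
  obtain B1 B2 where B: "call s1 = Some B1" "call s2 = Some B2"
    using in_witness_call assms(1,2) by metis
  have meet': "sc B1 \<inter> sc B2 \<noteq> {}" "sc B2 \<inter> sc B1 \<noteq> {}" using meet B by auto
  have le: "s1 \<le> t" "s2 \<le> t" using in_witness_le assms(1,2) by auto
  have "(s1, s2) \<in> R \<or> (s2, s1) \<in> R"
    using assms(3) witness_rel_intro[OF _ le(2) B meet'(1)] witness_rel_intro[OF _ le(1) B(2,1) meet'(2)]
    by (cases "s1 < s2") auto
  then show False
    using in_witness_pred[of s1 s2] in_witness_pred[of s2 s1] assms(1,2,4) by auto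
qed

lemma finite_witness: "finite {s. in_witness call t s}"
  using in_witness_le by (auto intro: finite_subset[of _ "{..t}"])

lemma depth_le_max_depth: "in_witness call t s \<Longrightarrow> depth call t s \<le> max_depth call t"
  unfolding max_depth_def using finite_witness by (intro Max_ge) auto

lemma max_depth_attained: "\<exists>s. in_witness call t s \<and> depth call t s = max_depth call t"
proof -
  have "max_depth call t \<in> depth call t ` {s. in_witness call t s}"
    unfolding max_depth_def using finite_witness in_witness_root by (intro Max_in) auto
  then show ?thesis by auto
qed

lemma max_depth_le: "max_depth call t \<le> t"
  using max_depth_attained witness_relpow_D[OF depth_path] by fastforce

lemma mem_layer_iff:
  "B \<in> layer call t i \<longleftrightarrow> (\<exists>s. in_witness call t s \<and> depth call t s = i \<and> call s = Some B)"
proof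
  assume "B \<in> layer call t i"
  then obtain s where s: "in_witness call t s" "depth call t s = i" "B = the (call s)"
    unfolding layer_def by blast
  moreover obtain B' where "call s = Some B'" using in_witness_call[OF s(1)] .
  ultimately show "\<exists>s. in_witness call t s \<and> depth call t s = i \<and> call s = Some B" by auto
qed (force simp: layer_def)

lemma length_witness: "length (witness call t) = Suc (max_depth call t)"
  by (simp add: witness_def)

lemma nth_witness: "i < length (witness call t) \<Longrightarrow> witness call t ! i = layer call t i"
  by (simp add: witness_def del: upt_Suc)

lemma layer_0: "layer call t 0 = {A}"
proof -
  have "{s. in_witness call t s \<and> depth call t s = 0} = {t}"
    using depth_eq_0_iff in_witness_root by auto
  then show ?thesis unfolding layer_def using call_t by simp
qed

lemma layer_nonempty:
  assumes "i \<le> max_depth call t"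
  shows "layer call t i \<noteq> {}"
proof -
  have "layer call t i \<noteq> {}" if "in_witness call t s" "i \<le> depth call t s" for s
    using that
  proof (induction "depth call t s" arbitrary: s)
    case 0
    then show ?case using layer_0 by simp
  next
    case (Suc n)
    show ?case
    proof (cases "i = depth call t s")
      case True
      then show ?thesis using Suc.prems by (auto simp: layer_def)
    next
      case False
      have "s \<noteq> t" using Suc.hyps(2) depth_root by auto
      with Suc.prems obtain s' where "in_witness call t s'" "depth call t s = Suc (depth call t s')"
        by (blast elim: in_witness_succ)
      then show ?thesis using Suc False by auto
    qed
  qed
  then show ?thesis using max_depth_attained assms by metis
qed

lemma layer_disjoint: "disjoint_family_on sc (layer call t i)"
  unfolding disjoint_family_on_def layer_def using same_depth_disjoint by blast

lemma layer_Suc_neighbourhood: "layer call t (Suc i) \<subseteq> neighbourhood (layer call t i)"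
proof
  fix B assume "B \<in> layer call t (Suc i)"
  then obtain s where s: "in_witness call t s" "depth call t s = Suc i" "call s = Some B"
    by (auto simp: mem_layer_iff)
  then have "s \<noteq> t" using depth_root by auto
  with s(1) obtain s' where s': "(s, s') \<in> R" "in_witness call t s'" "depth call t s' = i"
    using s(2) by (metis in_witness_succ nat.inject)
  obtain B' where B': "call s' = Some B'" using in_witness_call[OF s'(2)] .
  have "B' \<in> layer call t i" using s' B' by (auto simp: mem_layer_iff)
  moreover have "sc B \<inter> sc B' \<noteq> {}" using s'(1) s(3) B' by (simp add: witness_rel_def)
  ultimately show "B \<in> neighbourhood (layer call t i)" unfolding neighbourhood_def by blast
qed

lemma layer_subset:
  assumes "\<And>s c. call s = Some c \<Longrightarrow> c \<in> U"
  shows "layer call t i \<subseteq> U"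
  using assms by (auto simp: mem_layer_iff)

lemma finite_layer: "finite (layer call t i)"
  unfolding layer_def using finite_witness by simp

lemma witness_Cons: "witness call t = {A} # map (layer call t) [1..<Suc (max_depth call t)]"
  unfolding witness_def using layer_0 by (simp add: upt_rec)

lemma stable_seq_witness:
  assumes "\<And>s c. call s = Some c \<Longrightarrow> c \<in> U"
  shows "stable_seq U {A} (tl (witness call t))"
proof -
  have "stable_seq U (layer call t j) (map (layer call t) [Suc j..<Suc (max_depth call t)])"
    if "j \<le> max_depth call t" for j
    using that
  proof (induction "max_depth call t - j" arbitrary: j)
    case (Suc n)
    then have "[Suc j..<Suc (max_depth call t)] = Suc j # [Suc (Suc j)..<Suc (max_depth call t)]"
      by (simp add: upt_rec)
    then show ?case
      using Suc layer_nonempty layer_subset[OF assms] layer_disjoint layer_Suc_neighbourhood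
      by (auto simp: next_layers_def)
  qed simp
  from this[of 0] show ?thesis by (simp add: witness_Cons layer_0)
qed

text \<open>The sample of edge \<open>e\<close> seen by a call in layer \<open>i\<close> is indexed by the number of
  earlier calls touching \<open>e\<close>; these are exactly the deeper witness nodes containing \<open>e\<close>.\<close>

lemma earlier_touching_call_deeper:
  assumes s: "in_witness call t s" "call s = Some B" "e \<in> sc B"
    and s': "s' < s" "call s' = Some B'" "e \<in> sc B'"
  shows "in_witness call t s' \<and> depth call t s < depth call t s'"
proof -
  have "(s', s) \<in> R"
    using s s' in_witness_le[OF s(1)] by (intro witness_rel_intro[where B = B' and B' = B]) auto
  then show ?thesis using in_witness_pred s(1) by blast
qed

lemma touching_calls_deeper:
  assumes s: "in_witness call t s" "call s = Some B" "e \<in> sc B"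
  shows "(\<lambda>s'. (depth call t s', the (call s'))) ` {s'. s' < s \<and> (\<exists>c. call s' = Some c \<and> e \<in> sc c)}
       = (SIGMA j:{Suc (depth call t s)..<Suc (max_depth call t)}. {B\<in>layer call t j. e \<in> sc B})"
    (is "?f ` ?X = ?Y")
proof (intro equalityI subsetI)
  fix y assume "y \<in> ?f ` ?X"
  then obtain s' B' where s': "y = ?f s'" "s' < s" "call s' = Some B'" "e \<in> sc B'" by blast
  with earlier_touching_call_deeper[OF s] have "in_witness call t s'" "depth call t s < depth call t s'"
    by auto
  then show "y \<in> ?Y"
    using depth_le_max_depth[OF \<open>in_witness call t s'\<close>] s' by (auto simp: mem_layer_iff)
next
  fix y assume "y \<in> ?Y"
  then obtain s' B' where s': "y = ?f s'" "in_witness call t s'" "depth call t s < depth call t s'"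
    "call s' = Some B'" "e \<in> sc B'"
    by (auto simp: mem_layer_iff)
  have "s' < s"
  proof (rule ccontr)
    assume "\<not> s' < s"
    moreover have "s' \<noteq> s" using s'(3) by auto
    ultimately have "(s, s') \<in> R"
      using s s'(4,5) in_witness_le[OF s'(2)] by (intro witness_rel_intro[where B = B and B' = B']) auto
    then have "depth call t s' < depth call t s" using in_witness_pred[OF _ s'(2)] by blast
    with s'(3) show False by simp
  qed
  with s'(4,5) have "s' \<in> ?X" by blast
  then show "y \<in> ?f ` ?X" by (rule rev_image_eqI) (simp add: s'(1,4))
qed

lemma resample_counts_eq_sample_index:
  assumes s: "in_witness call t s" "call s = Some B" "e \<in> sc B"
  shows "resample_counts call s e = sample_index (witness call t) (depth call t s) e"
proof -
  let ?X = "{s'. s' < s \<and> (\<exists>c. call s' = Some c \<and> e \<in> sc c)}"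
  let ?f = "\<lambda>s'. (depth call t s', the (call s'))"
  have "inj_on ?f ?X"
  proof (rule inj_onI)
    fix x y assume x: "x \<in> ?X" and y: "y \<in> ?X" and eq: "?f x = ?f y"
    from x obtain Bx where Bx: "x < s" "call x = Some Bx" "e \<in> sc Bx" by blast
    from y obtain By where By: "y < s" "call y = Some By" "e \<in> sc By" by blast
    show "x = y"
    proof (rule ccontr)
      assume "x \<noteq> y"
      then have "sc Bx \<inter> sc By = {}"
        using same_depth_disjoint[of x y] earlier_touching_call_deeper[OF s Bx]
          earlier_touching_call_deeper[OF s By] eq Bx(2) By(2) by auto
      then show False using Bx(3) By(3) by blast
    qed
  qed
  then have "resample_counts call s e = card (?f ` ?X)"
    unfolding resample_counts_def by (simp add: card_image)
  also have "\<dots> = (\<Sum>j\<in>{Suc (depth call t s)..<Suc (max_depth call t)}. card {B\<in>layer call t j. e \<in> sc B})"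
    unfolding touching_calls_deeper[OF s] using finite_layer by (subst card_SigmaI) auto
  also have "\<dots> = sample_index (witness call t) (depth call t s) e"
    unfolding sample_index_def length_witness using nth_witness length_witness
    by (intro sum.cong) auto
  finally show ?thesis .
qed

lemma witness_event_witness:
  assumes "\<And>s c. call s = Some c \<Longrightarrow> active Z (\<lambda>e. \<omega> (e, resample_counts call s e)) c"
  shows "\<omega> \<in> witness_event Z (witness call t)"
  unfolding witness_event_def
proof (intro CollectI allI impI ballI)
  fix i B assume "i < length (witness call t)" "B \<in> witness call t ! i"
  then obtain s where s: "in_witness call t s" "depth call t s = i" "call s = Some B"
    by (auto simp: nth_witness mem_layer_iff)
  have "\<omega> (e, resample_counts call s e) = \<omega> (e, sample_index (witness call t) i e)" if "e \<in> sc B" for e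
    using resample_counts_eq_sample_index[OF s(1,3) that] s(2) by simp
  then have "active Z (\<lambda>e. \<omega> (e, resample_counts call s e)) B
      = active Z (\<lambda>e. \<omega> (e, sample_index (witness call t) i e)) B"
    by (rule active_cong)
  with assms[OF s(3)] show "active Z (\<lambda>e. \<omega> (e, sample_index (witness call t) i e)) B" by simp
qed

lemma card_layers_containing_root:
  "card {i. i < length (witness call t) \<and> A \<in> witness call t ! i} = card {s. s \<le> t \<and> call s = Some A}"
proof -
  let ?S = "{s. in_witness call t s \<and> call s = Some A}"
  have calls: "{s. s \<le> t \<and> call s = Some A} = ?S"
  proof (intro equalityI subsetI)
    fix s assume s: "s \<in> {s. s \<le> t \<and> call s = Some A}"
    show "s \<in> ?S"
    proof (cases "s = t")
      case False
      then have "(s, t) \<in> R" using s call_t sc_nonempty[of A] by (intro witness_rel_intro) auto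
      then show ?thesis using in_witness_pred in_witness_root s by auto
    qed (use in_witness_root s in auto)
  qed (auto intro: in_witness_le)
  have "{i. i < length (witness call t) \<and> A \<in> witness call t ! i} = depth call t ` ?S"
  proof (intro equalityI subsetI)
    fix i assume "i \<in> {i. i < length (witness call t) \<and> A \<in> witness call t ! i}"
    then obtain s where "in_witness call t s" "depth call t s = i" "call s = Some A"
      by (auto simp: nth_witness mem_layer_iff)
    then show "i \<in> depth call t ` ?S" by blast
  next
    fix i assume "i \<in> depth call t ` ?S"
    then obtain s where s: "in_witness call t s" "call s = Some A" "i = depth call t s" by blast
    then have "i < length (witness call t)"
      using depth_le_max_depth[OF s(1)] by (simp add: length_witness)
    moreover have "A \<in> layer call t i" using s by (auto simp: mem_layer_iff)
    ultimately show "i \<in> {i. i < length (witness call t) \<and> A \<in> witness call t ! i}"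
      by (simp add: nth_witness)
  qed
  moreover have "inj_on (depth call t) ?S"
  proof (rule inj_onI)
    fix x y assume "x \<in> ?S" "y \<in> ?S" "depth call t x = depth call t y"
    then show "x = y" using same_depth_disjoint[of x y] sc_nonempty[of A] by auto
  qed
  ultimately show ?thesis by (simp add: card_image calls)
qed

end

lemma witness_inj:
  assumes "call t1 = Some A" "call t2 = Some A" "t1 \<noteq> t2"
  shows "witness call t1 \<noteq> witness call t2"
proof
  assume eq: "witness call t1 = witness call t2"
  have less: "card {s. s \<le> t1 \<and> call s = Some A} < card {s. s \<le> t2 \<and> call s = Some A}"
    if "t1 < t2" "call t2 = Some A" for t1 t2
  proof (rule psubset_card_mono)
    have "t2 \<in> {s. s \<le> t2 \<and> call s = Some A}" "t2 \<notin> {s. s \<le> t1 \<and> call s = Some A}"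
      using that by auto
    then have "{s. s \<le> t1 \<and> call s = Some A} \<noteq> {s. s \<le> t2 \<and> call s = Some A}" by blast
    then show "{s. s \<le> t1 \<and> call s = Some A} \<subset> {s. s \<le> t2 \<and> call s = Some A}"
      using that by auto
  qed simp
  show False
    using less[of t1 t2] less[of t2 t1] assms eq
      card_layers_containing_root[of call t1 A] card_layers_containing_root[of call t2 A]
    by (metis less_irrefl nat_neq_iff)
qed

subsection \<open>The cluster criterion\<close>

definition stable_seqs :: "cand set \<Rightarrow> cand set \<Rightarrow> nat \<Rightarrow> cand set list set" where
  "stable_seqs U I n = {Ls. length Ls \<le> n \<and> stable_seq U I Ls}"

definition seq_weight :: "real \<Rightarrow> cand set list \<Rightarrow> real" where
  "seq_weight p Ls = p ^ sum_list (map card Ls)"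

text \<open>Stated for whole independent sets \<open>I\<close>, so that it can be applied to every layer of a
  stable sequence in turn.\<close>

definition cluster_criterion :: "cand set \<Rightarrow> real \<Rightarrow> real \<Rightarrow> bool" where
  "cluster_criterion U p \<mu> \<longleftrightarrow> (\<forall>I. I \<subseteq> U \<longrightarrow> disjoint_family_on sc I \<longrightarrow>
      p ^ card I * (\<Sum>L\<in>next_layers U I. \<mu> ^ card L) \<le> \<mu> ^ card I)"

lemma finite_next_layers: "finite U \<Longrightarrow> finite (next_layers U I)"
  unfolding next_layers_def by (rule finite_subset[of _ "Pow U"]) auto

lemma empty_in_next_layers: "{} \<in> next_layers U I"
  by (simp add: next_layers_def disjoint_family_on_def)

lemma finite_stable_seqs: "finite U \<Longrightarrow> finite (stable_seqs U I n)"
proof -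
  assume "finite U"
  have "stable_seqs U I n \<subseteq> {Ls. set Ls \<subseteq> Pow U \<and> length Ls \<le> n}"
    unfolding stable_seqs_def using stable_seq_layers by blast
  then show ?thesis
    using finite_lists_length_le[of "Pow U" n] \<open>finite U\<close> by (auto intro: finite_subset)
qed

lemma stable_seq_Cons_layers:
  assumes "A \<in> U" "Ls \<in> stable_seqs U {A} n"
  shows "\<forall>L\<in>set ({A} # Ls). L \<subseteq> U \<and> disjoint_family_on sc L"
  using assms stable_seq_layers[of U "{A}" Ls] by (simp add: disjoint_family_on_def stable_seqs_def)

lemma stable_seqs_Suc:
  "stable_seqs U I (Suc n) = insert [] (\<Union>L\<in>next_layers U I - {{}}. (#) L ` stable_seqs U L n)"
proof (intro equalityI subsetI)
  fix Ls assume Ls: "Ls \<in> stable_seqs U I (Suc n)"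
  show "Ls \<in> insert [] (\<Union>L\<in>next_layers U I - {{}}. (#) L ` stable_seqs U L n)"
  proof (cases Ls)
    case (Cons L Ls')
    with Ls have "L \<in> next_layers U I - {{}}" "Ls' \<in> stable_seqs U L n"
      by (auto simp: stable_seqs_def)
    then show ?thesis using Cons by blast
  qed simp
qed (auto simp: stable_seqs_def)

lemma sum_stable_seqs_Suc:
  assumes U: "finite U"
  shows "(\<Sum>Ls\<in>stable_seqs U I (Suc n). seq_weight p Ls) =
    1 + (\<Sum>L\<in>next_layers U I - {{}}. p ^ card L * (\<Sum>Ls\<in>stable_seqs U L n. seq_weight p Ls))"
proof -
  let ?C = "\<lambda>L. (#) L ` stable_seqs U L n"
  have fin: "finite (next_layers U I - {{}})" "\<And>L. finite (?C L)"
    using finite_next_layers[OF U] finite_stable_seqs[OF U] by auto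
  have "(\<Sum>Ls\<in>stable_seqs U I (Suc n). seq_weight p Ls) =
      seq_weight p [] + (\<Sum>Ls\<in>(\<Union>L\<in>next_layers U I - {{}}. ?C L). seq_weight p Ls)"
    unfolding stable_seqs_Suc using fin by (subst sum.insert) auto
  also have "(\<Sum>Ls\<in>(\<Union>L\<in>next_layers U I - {{}}. ?C L). seq_weight p Ls) =
      (\<Sum>L\<in>next_layers U I - {{}}. \<Sum>Ls\<in>?C L. seq_weight p Ls)"
    using fin by (intro sum.UNION_disjoint) auto
  also have "\<dots> = (\<Sum>L\<in>next_layers U I - {{}}. \<Sum>Ls\<in>stable_seqs U L n. seq_weight p (L # Ls))"
    by (rule sum.cong[OF refl]) (simp add: sum.reindex inj_on_def)
  finally show ?thesis by (simp add: seq_weight_def power_add sum_distrib_left)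
qed

lemma stable_seqs_weight_le:
  assumes U: "finite U" and p: "0 \<le> p" and \<mu>: "0 \<le> \<mu>" and crit: "cluster_criterion U p \<mu>"
    and I: "I \<subseteq> U" "disjoint_family_on sc I"
  shows "p ^ card I * (\<Sum>Ls\<in>stable_seqs U I n. seq_weight p Ls) \<le> \<mu> ^ card I"
  using I
proof (induction n arbitrary: I)
  case 0
  have "stable_seqs U I 0 = {[]}" by (auto simp: stable_seqs_def)
  then have "(\<Sum>Ls\<in>stable_seqs U I 0. seq_weight p Ls) = 1" by (simp add: seq_weight_def)
  also have "1 \<le> (\<Sum>L\<in>next_layers U I. \<mu> ^ card L)"
    using member_le_sum[of "{}" "next_layers U I" "\<lambda>L. \<mu> ^ card L"] empty_in_next_layers
      \<mu> finite_next_layers[OF U] by simp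
  finally have "p ^ card I * (\<Sum>Ls\<in>stable_seqs U I 0. seq_weight p Ls)
      \<le> p ^ card I * (\<Sum>L\<in>next_layers U I. \<mu> ^ card L)"
    using p by (simp add: mult_left_mono)
  also have "\<dots> \<le> \<mu> ^ card I" using crit 0 by (simp add: cluster_criterion_def)
  finally show ?case .
next
  case (Suc n)
  have "(\<Sum>L\<in>next_layers U I - {{}}. p ^ card L * (\<Sum>Ls\<in>stable_seqs U L n. seq_weight p Ls))
      \<le> (\<Sum>L\<in>next_layers U I - {{}}. \<mu> ^ card L)"
    using Suc.IH by (intro sum_mono) (simp add: next_layers_def)
  then have "(\<Sum>Ls\<in>stable_seqs U I (Suc n). seq_weight p Ls) \<le> (\<Sum>L\<in>next_layers U I. \<mu> ^ card L)"
    using finite_next_layers[OF U] empty_in_next_layers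
    by (simp add: sum_stable_seqs_Suc[OF U] sum.remove[of _ "{}"])
  then have "p ^ card I * (\<Sum>Ls\<in>stable_seqs U I (Suc n). seq_weight p Ls)
      \<le> p ^ card I * (\<Sum>L\<in>next_layers U I. \<mu> ^ card L)"
    using p by (simp add: mult_left_mono)
  also have "\<dots> \<le> \<mu> ^ card I" using crit Suc.prems by (simp add: cluster_criterion_def)
  finally show ?case .
qed

definition sample_values :: "nat \<Rightarrow> nat \<Rightarrow> val set" where
  "sample_values m Z = {0..m} \<times> {0..<Z}"

lemma finite_sample_values: "finite (sample_values m Z)"
  by (simp add: sample_values_def)

lemma card_sample_values: "card (sample_values m Z) = (m + 1) * Z"
  by (simp add: sample_values_def card_cartesian_product)

lemma space_table_space [simp]: "space (table_space m Z) = UNIV"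
  by (simp add: table_space_def space_PiM)

lemma sets_table_cylinder:
  assumes "finite K"
  shows "{\<omega>. \<forall>x\<in>K. \<omega> x = f x} \<in> sets (table_space m Z)"
proof -
  have "{\<omega> \<in> space (table_space m Z). \<forall>x\<in>K. \<omega> x \<in> {f x}} \<in> sets (table_space m Z)"
    unfolding table_space_def
    by (rule sets.sets_Collect_finite_All[OF _ assms]) (rule sets_Collect_single, auto)
  then show ?thesis by simp
qed

text \<open>An event that depends only on the finitely many samples in \<open>K\<close> is a countable union
  of cylinders, since every sample space is countable.\<close>

lemma sets_table_finite_dependence:
  assumes K: "finite K" and E: "\<And>\<omega> \<omega>'. \<omega> \<in> E \<Longrightarrow> \<forall>x\<in>K. \<omega>' x = \<omega> x \<Longrightarrow> \<omega>' \<in> E"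
  shows "E \<in> sets (table_space m Z)"
proof -
  let ?C = "\<lambda>f. {\<omega>. \<forall>x\<in>K. \<omega> x = f x}"
  have "E = (\<Union>f\<in>(\<lambda>\<omega>. restrict \<omega> K) ` E. ?C f)"
  proof (intro equalityI subsetI)
    fix \<omega> assume "\<omega> \<in> E"
    then show "\<omega> \<in> (\<Union>f\<in>(\<lambda>\<omega>. restrict \<omega> K) ` E. ?C f)" by (intro UN_I[OF imageI]) auto
  next
    fix \<omega> assume "\<omega> \<in> (\<Union>f\<in>(\<lambda>\<omega>. restrict \<omega> K) ` E. ?C f)"
    then obtain \<omega>0 where "\<omega>0 \<in> E" "\<forall>x\<in>K. \<omega> x = \<omega>0 x" by auto
    then show "\<omega> \<in> E" by (rule E)
  qed
  moreover have "countable ((\<lambda>\<omega>. restrict \<omega> K) ` E)"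
    by (rule countable_subset[OF _ countable_PiE[OF K, of "\<lambda>_. UNIV :: val set"]]) auto
  then have "(\<Union>f\<in>(\<lambda>\<omega>. restrict \<omega> K) ` E. ?C f) \<in> sets (table_space m Z)"
    by (rule sets.countable_UN') (use sets_table_cylinder[OF K] in blast)
  ultimately show ?thesis by simp
qed

lemma sets_table_outside: "{\<omega>. \<omega> x \<notin> S} \<in> sets (table_space m Z)"
proof -
  have "{\<omega> \<in> space (table_space m Z). \<omega> x \<in> - S} \<in> sets (table_space m Z)"
    unfolding table_space_def by (rule sets_Collect_single) auto
  then show ?thesis by simp
qed

context
  fixes m Z :: nat
  assumes Z: "Z \<ge> 1"
begin

private abbreviation "q \<equiv> pmf_of_set (sample_values m Z)"

private lemma sample_values_nonempty: "sample_values m Z \<noteq> {}"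
  using Z by (auto simp: sample_values_def)

lemma emeasure_table_cylinder:
  assumes K: "finite K" and f: "\<forall>x\<in>K. f x \<in> sample_values m Z"
  shows "emeasure (table_space m Z) {\<omega>. \<forall>x\<in>K. \<omega> x = f x}
    = ennreal ((1 / card (sample_values m Z)) ^ card K)"
proof -
  interpret P: product_prob_space "\<lambda>_::edge \<times> nat. measure_pmf q" UNIV
    by (rule product_prob_spaceI) (simp add: prob_space_measure_pmf)
  have "emeasure (table_space m Z) {\<omega>. \<forall>x\<in>K. \<omega> x = f x} =
      emeasure (PiM UNIV (\<lambda>_. measure_pmf q)) {\<omega> \<in> space (PiM UNIV (\<lambda>_. measure_pmf q)). \<forall>x\<in>K. \<omega> x \<in> {f x}}"
    by (simp add: table_space_def sample_values_def space_PiM)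
  also have "\<dots> = (\<Prod>x\<in>K. emeasure (measure_pmf q) {f x})"
    by (rule P.emeasure_PiM_Collect) (use K in auto)
  also have "\<dots> = (\<Prod>x\<in>K. ennreal (1 / card (sample_values m Z)))"
    using f finite_sample_values sample_values_nonempty
    by (intro prod.cong refl) (simp add: emeasure_pmf_of_set)
  finally show ?thesis by (simp add: ennreal_power)
qed

lemma emeasure_table_outside: "emeasure (table_space m Z) {\<omega>. \<omega> x \<notin> sample_values m Z} = 0"
proof -
  interpret P: product_prob_space "\<lambda>_::edge \<times> nat. measure_pmf q" UNIV
    by (rule product_prob_spaceI) (simp add: prob_space_measure_pmf)
  have "emeasure (table_space m Z) {\<omega>. \<omega> x \<notin> sample_values m Z} =
      emeasure (PiM UNIV (\<lambda>_. measure_pmf q)) {\<omega> \<in> space (PiM UNIV (\<lambda>_. measure_pmf q)). \<omega> x \<in> - sample_values m Z}"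
    by (simp add: table_space_def sample_values_def space_PiM)
  also have "\<dots> = emeasure (measure_pmf q) (- sample_values m Z)"
    by (rule P.emeasure_PiM_Collect_single) auto
  finally show ?thesis
    using finite_sample_values sample_values_nonempty by (simp add: emeasure_pmf_of_set)
qed

text \<open>Union bound over the admissible restrictions to \<open>K\<close>; tables leaving the range of
  the sample distribution form a null set.\<close>

lemma emeasure_table_le_card_restrictions:
  assumes K: "finite K" and F: "F \<subseteq> K \<rightarrow>\<^sub>E sample_values m Z"
    and E: "\<And>\<omega>. \<omega> \<in> E \<Longrightarrow> \<forall>x\<in>K. \<omega> x \<in> sample_values m Z \<Longrightarrow> restrict \<omega> K \<in> F"
  shows "emeasure (table_space m Z) E \<le> ennreal (card F * (1 / card (sample_values m Z)) ^ card K)"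
proof -
  let ?T = "table_space m Z"
  let ?C = "\<lambda>f. {\<omega>. \<forall>x\<in>K. \<omega> x = f x}" and ?B = "\<lambda>x. {\<omega>. \<omega> x \<notin> sample_values m Z}"
  have finF: "finite F"
    using F finite_PiE[OF K, of "\<lambda>_. sample_values m Z"] finite_sample_values finite_subset by blast
  have cover: "E \<subseteq> (\<Union>f\<in>F. ?C f) \<union> (\<Union>x\<in>K. ?B x)"
  proof
    fix \<omega> assume "\<omega> \<in> E"
    then show "\<omega> \<in> (\<Union>f\<in>F. ?C f) \<union> (\<Union>x\<in>K. ?B x)"
      using E[of \<omega>] by (cases "\<forall>x\<in>K. \<omega> x \<in> sample_values m Z") (auto intro!: bexI[of _ "restrict \<omega> K"])
  qed
  have mC: "(\<Union>f\<in>F. ?C f) \<in> sets ?T" using finF sets_table_cylinder[OF K] by blast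
  have mB: "(\<Union>x\<in>K. ?B x) \<in> sets ?T" using K sets_table_outside by blast
  have "emeasure ?T E \<le> emeasure ?T ((\<Union>f\<in>F. ?C f) \<union> (\<Union>x\<in>K. ?B x))"
    by (rule emeasure_mono[OF cover]) (use mC mB in blast)
  also have "\<dots> \<le> emeasure ?T (\<Union>f\<in>F. ?C f) + emeasure ?T (\<Union>x\<in>K. ?B x)"
    by (rule emeasure_subadditive[OF mC mB])
  also have "emeasure ?T (\<Union>x\<in>K. ?B x) \<le> (\<Sum>x\<in>K. emeasure ?T (?B x))"
    by (rule emeasure_subadditive_finite) (use K sets_table_outside in auto)
  also have "(\<Sum>x\<in>K. emeasure ?T (?B x)) = 0" using emeasure_table_outside by simp
  also have "emeasure ?T (\<Union>f\<in>F. ?C f) \<le> (\<Sum>f\<in>F. emeasure ?T (?C f))"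
    by (rule emeasure_subadditive_finite) (use finF sets_table_cylinder[OF K] in auto)
  also have "(\<Sum>f\<in>F. emeasure ?T (?C f)) = (\<Sum>f\<in>F. ennreal ((1 / card (sample_values m Z)) ^ card K))"
    using F by (intro sum.cong refl emeasure_table_cylinder[OF K]) (auto simp: PiE_def Pi_def)
  finally show ?thesis by (simp add: ennreal_of_nat_eq_real_of_nat ennreal_mult)
qed

end

subsection \<open>Probability of a witness event\<close>

definition quadruple :: "(edge \<Rightarrow> val) \<Rightarrow> cand \<Rightarrow> val \<times> val \<times> val \<times> val" where
  "quadruple X c = (case c of (j1, i1, j2, i2) \<Rightarrow> (X (i1, j1), X (i1, j2), X (i2, j1), X (i2, j2)))"

definition active_quadruples :: "nat \<Rightarrow> nat \<Rightarrow> (val \<times> val \<times> val \<times> val) set" where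
  "active_quadruples m Z = {(a, b, c, d). {a, b, c, d} \<subseteq> sample_values m Z \<and>
      fst a + fst d = fst b + fst c \<and> (snd a + snd d) mod Z = (snd b + snd c) mod Z}"

definition nodes :: "cand set list \<Rightarrow> (nat \<times> cand) set" where
  "nodes \<sigma> = (SIGMA i:{..<length \<sigma>}. \<sigma> ! i)"

definition node_samples :: "cand set list \<Rightarrow> nat \<times> cand \<Rightarrow> (edge \<times> nat) set" where
  "node_samples \<sigma> v = (\<lambda>e. (e, sample_index \<sigma> (fst v) e)) ` sc (snd v)"

definition witness_samples :: "cand set list \<Rightarrow> (edge \<times> nat) set" where
  "witness_samples \<sigma> = (\<Union>v\<in>nodes \<sigma>. node_samples \<sigma> v)"

lemma quadruple_active:
  "active Z X c \<Longrightarrow> \<forall>e\<in>sc c. X e \<in> sample_values m Z \<Longrightarrow> quadruple X c \<in> active_quadruples m Z"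
  by (cases c) (simp add: active_def quadruple_def active_quadruples_def sc_def)

lemma quadruple_eqD: "quadruple X c = quadruple Y c \<Longrightarrow> e \<in> sc c \<Longrightarrow> X e = Y e"
  by (cases c) (auto simp: quadruple_def sc_def)

lemma finite_active_quadruples: "finite (active_quadruples m Z)"
  by (rule finite_subset[of _ "sample_values m Z \<times> sample_values m Z \<times> sample_values m Z \<times> sample_values m Z"])
    (auto simp: active_quadruples_def finite_sample_values)

lemma witness_event_iff_nodes:
  "\<omega> \<in> witness_event Z \<sigma> \<longleftrightarrow> (\<forall>v\<in>nodes \<sigma>. active Z (\<lambda>e. \<omega> (e, sample_index \<sigma> (fst v) e)) (snd v))"
  by (auto simp: witness_event_def nodes_def)

lemma witness_event_local:
  assumes "\<forall>x\<in>witness_samples \<sigma>. \<omega>' x = \<omega> x"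
  shows "\<omega>' \<in> witness_event Z \<sigma> \<longleftrightarrow> \<omega> \<in> witness_event Z \<sigma>"
  unfolding witness_event_iff_nodes
  using assms by (intro ball_cong refl active_cong) (auto simp: witness_samples_def node_samples_def)

lemma finite_C4: "finite (C4 \<gamma> \<kappa>)"
  by (rule finite_subset[of _ "{..<\<kappa>} \<times> {..<\<gamma>} \<times> {..<\<kappa>} \<times> {..<\<gamma>}"]) (auto simp: C4_def)

lemma card_sc: "B \<in> C4 \<gamma> \<kappa> \<Longrightarrow> card (sc B) = 4"
  by (auto simp: C4_def sc_def)

lemma quadruple_node_active:
  assumes f: "f \<in> witness_samples \<sigma> \<rightarrow>\<^sub>E sample_values m Z" "f \<in> witness_event Z \<sigma>" and v: "v \<in> nodes \<sigma>"
  shows "quadruple (\<lambda>e. f (e, sample_index \<sigma> (fst v) e)) (snd v) \<in> active_quadruples m Z"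
proof (rule quadruple_active)
  show "active Z (\<lambda>e. f (e, sample_index \<sigma> (fst v) e)) (snd v)"
    using f v by (simp add: witness_event_iff_nodes)
  show "\<forall>e\<in>sc (snd v). f (e, sample_index \<sigma> (fst v) e) \<in> sample_values m Z"
  proof
    fix e assume "e \<in> sc (snd v)"
    then have "(e, sample_index \<sigma> (fst v) e) \<in> witness_samples \<sigma>"
      using v unfolding witness_samples_def node_samples_def by blast
    then show "f (e, sample_index \<sigma> (fst v) e) \<in> sample_values m Z" by (rule PiE_mem[OF f(1)])
  qed
qed

context
  fixes \<gamma> \<kappa> :: nat and \<sigma> :: "cand set list"
  assumes layers: "\<forall>L\<in>set \<sigma>. L \<subseteq> C4 \<gamma> \<kappa> \<and> disjoint_family_on sc L"
begin

lemma finite_nth_layer: "i < length \<sigma> \<Longrightarrow> finite (\<sigma> ! i)"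
  using layers nth_mem finite_subset[OF _ finite_C4] by blast

lemma finite_nodes: "finite (nodes \<sigma>)"
  unfolding nodes_def using finite_nth_layer by auto

lemma card_nodes: "card (nodes \<sigma>) = sum_list (map card \<sigma>)"
  unfolding nodes_def using finite_nth_layer
  by (simp add: sum_list_sum_nth atLeast0LessThan)

lemma finite_witness_samples: "finite (witness_samples \<sigma>)"
  unfolding witness_samples_def node_samples_def by (simp add: finite_nodes finite_sc)

lemma sample_index_decreasing:
  assumes "i < i'" "i' < length \<sigma>" "B \<in> \<sigma> ! i'" "e \<in> sc B"
  shows "sample_index \<sigma> i' e < sample_index \<sigma> i e"
proof -
  let ?c = "\<lambda>j. card {B\<in>\<sigma>!j. e \<in> sc B}"
  have "B \<in> {B\<in>\<sigma>!i'. e \<in> sc B}" "finite {B\<in>\<sigma>!i'. e \<in> sc B}"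
    using assms(3,4) finite_nth_layer[OF assms(2)] by auto
  then have "0 < ?c i'" using card_gt_0_iff by blast
  then have "sample_index \<sigma> i' e < (\<Sum>j\<in>insert i' {Suc i'..<length \<sigma>}. ?c j)"
    unfolding sample_index_def by simp
  also have "\<dots> \<le> sample_index \<sigma> i e"
    unfolding sample_index_def using assms(1,2) by (intro sum_mono2) auto
  finally show ?thesis .
qed

text \<open>Distinct nodes of a witness read distinct samples: along an edge, deeper layers use
  lower sample indices, and within a layer the candidates are edge-disjoint.\<close>

lemma node_samples_disjoint:
  assumes v: "v \<in> nodes \<sigma>" and w: "w \<in> nodes \<sigma>" and "v \<noteq> w"
  shows "node_samples \<sigma> v \<inter> node_samples \<sigma> w = {}"
proof (rule ccontr)
  obtain i B i' B' where vw: "v = (i, B)" "w = (i', B')" by (cases v, cases w) blast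
  have iB: "i < length \<sigma>" "B \<in> \<sigma> ! i" "i' < length \<sigma>" "B' \<in> \<sigma> ! i'"
    using v w vw by (auto simp: nodes_def)
  assume "node_samples \<sigma> v \<inter> node_samples \<sigma> w \<noteq> {}"
  then obtain e where e: "e \<in> sc B" "e \<in> sc B'" "sample_index \<sigma> i e = sample_index \<sigma> i' e"
    unfolding node_samples_def vw by auto
  consider "i < i'" | "i' < i" | "i = i'" by arith
  then show False
  proof cases
    case 3
    then have "B \<noteq> B'" using \<open>v \<noteq> w\<close> vw by simp
    moreover have "disjoint_family_on sc (\<sigma> ! i)" using layers iB(1) by simp
    ultimately show False using e iB 3 by (auto simp: disjoint_family_on_def)
  next
    case 1
    from sample_index_decreasing[OF this iB(3,4) e(2)] e(3) show False by simp
  next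
    case 2
    from sample_index_decreasing[OF this iB(1,2) e(1)] e(3) show False by simp
  qed
qed

lemma card_witness_samples: "card (witness_samples \<sigma>) = 4 * sum_list (map card \<sigma>)"
proof -
  have "card (witness_samples \<sigma>) = (\<Sum>v\<in>nodes \<sigma>. card (node_samples \<sigma> v))"
    unfolding witness_samples_def using finite_nodes node_samples_disjoint
    by (intro card_UN_disjoint) (auto simp: node_samples_def finite_sc)
  also have "\<dots> = (\<Sum>v\<in>nodes \<sigma>. 4)"
  proof (rule sum.cong)
    fix v assume "v \<in> nodes \<sigma>"
    then have "fst v < length \<sigma>" "snd v \<in> \<sigma> ! fst v" by (auto simp: nodes_def)
    then have "snd v \<in> C4 \<gamma> \<kappa>" using layers nth_mem by blast
    then show "card (node_samples \<sigma> v) = 4"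
      unfolding node_samples_def by (simp add: card_image inj_on_def card_sc)
  qed simp
  finally show ?thesis by (simp add: card_nodes)
qed

lemma card_active_restrictions:
  "card {f \<in> witness_samples \<sigma> \<rightarrow>\<^sub>E sample_values m Z. f \<in> witness_event Z \<sigma>}
    \<le> card (active_quadruples m Z) ^ card (nodes \<sigma>)"
proof -
  let ?F = "{f \<in> witness_samples \<sigma> \<rightarrow>\<^sub>E sample_values m Z. f \<in> witness_event Z \<sigma>}"
  let ?q = "\<lambda>f v. quadruple (\<lambda>e. f (e, sample_index \<sigma> (fst v) e)) (snd v)"
  have "card ?F \<le> card (nodes \<sigma> \<rightarrow>\<^sub>E active_quadruples m Z)"
  proof (rule card_inj_on_le[where f = "\<lambda>f. restrict (?q f) (nodes \<sigma>)"])
    show "inj_on (\<lambda>f. restrict (?q f) (nodes \<sigma>)) ?F"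
    proof (rule inj_onI)
      fix f g assume f: "f \<in> ?F" and g: "g \<in> ?F"
        and h: "restrict (?q f) (nodes \<sigma>) = restrict (?q g) (nodes \<sigma>)"
      have "f x = g x" if x: "x \<in> witness_samples \<sigma>" for x
      proof -
        obtain v e where v: "v \<in> nodes \<sigma>" "e \<in> sc (snd v)" "x = (e, sample_index \<sigma> (fst v) e)"
          using x unfolding witness_samples_def node_samples_def by blast
        have "?q f v = ?q g v" using fun_cong[OF h, of v] v(1) by simp
        from quadruple_eqD[OF this v(2)] show ?thesis using v(3) by simp
      qed
      moreover have "f \<in> witness_samples \<sigma> \<rightarrow>\<^sub>E sample_values m Z" "g \<in> witness_samples \<sigma> \<rightarrow>\<^sub>E sample_values m Z"
        using f g by auto
      ultimately show "f = g" using PiE_ext by metis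
    qed
    show "(\<lambda>f. restrict (?q f) (nodes \<sigma>)) ` ?F \<subseteq> nodes \<sigma> \<rightarrow>\<^sub>E active_quadruples m Z"
      using quadruple_node_active by (intro image_subsetI restrict_PiE_iff[THEN iffD2] ballI) blast
  qed (simp add: finite_nodes finite_active_quadruples finite_PiE)
  also have "\<dots> = card (active_quadruples m Z) ^ card (nodes \<sigma>)"
    by (simp add: card_PiE finite_nodes)
  finally show ?thesis .
qed

lemma sets_witness_event: "witness_event Z \<sigma> \<in> sets (table_space m Z)"
proof (rule sets_table_finite_dependence[OF finite_witness_samples])
  fix \<omega> \<omega>' assume "\<omega> \<in> witness_event Z \<sigma>" "\<forall>x\<in>witness_samples \<sigma>. \<omega>' x = \<omega> x"
  then show "\<omega>' \<in> witness_event Z \<sigma>" using witness_event_local by blast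
qed

lemma emeasure_witness_event_le:
  assumes Z: "Z \<ge> 1"
  shows "emeasure (table_space m Z) (witness_event Z \<sigma>)
    \<le> ennreal ((card (active_quadruples m Z) / card (sample_values m Z) ^ 4) ^ sum_list (map card \<sigma>))"
proof -
  let ?F = "{f \<in> witness_samples \<sigma> \<rightarrow>\<^sub>E sample_values m Z. f \<in> witness_event Z \<sigma>}"
  let ?n = "sum_list (map card \<sigma>)"
  let ?v = "real (card (sample_values m Z))" and ?c = "real (card (active_quadruples m Z))"
  have "emeasure (table_space m Z) (witness_event Z \<sigma>) \<le> ennreal (card ?F * (1 / ?v) ^ card (witness_samples \<sigma>))"
  proof (rule emeasure_table_le_card_restrictions[OF Z finite_witness_samples])
    fix \<omega> assume "\<omega> \<in> witness_event Z \<sigma>" "\<forall>x\<in>witness_samples \<sigma>. \<omega> x \<in> sample_values m Z"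
    then show "restrict \<omega> (witness_samples \<sigma>) \<in> ?F"
      using witness_event_local[of \<sigma> "restrict \<omega> (witness_samples \<sigma>)" \<omega>] by auto
  qed auto
  also have "card ?F * (1 / ?v) ^ card (witness_samples \<sigma>) \<le> ?c ^ ?n * (1 / ?v) ^ (4 * ?n)"
    using card_active_restrictions[of m Z] unfolding card_witness_samples card_nodes
    by (intro mult_right_mono) (simp_all flip: of_nat_power)
  also have "?c ^ ?n * (1 / ?v) ^ (4 * ?n) = (?c / ?v ^ 4) ^ ?n"
    by (simp add: power_mult power_one_over power_divide flip: power_mult_distrib)
  finally show ?thesis by (simp add: ennreal_leI)
qed

end

definition call_seq :: "nat \<Rightarrow> cand list \<Rightarrow> (edge \<times> nat \<Rightarrow> val) \<Rightarrow> nat \<Rightarrow> cand option" where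
  "call_seq Z cs \<omega> n = snd (mt_step Z cs \<omega> (mt_state Z cs \<omega> n))"

lemma mt_state_0: "mt_state Z cs \<omega> 0 = (\<lambda>_. 0, [])"
  by (simp add: mt_state_def)

lemma mt_state_Suc: "mt_state Z cs \<omega> (Suc n) = fst (mt_step Z cs \<omega> (mt_state Z cs \<omega> n))"
  by (simp add: mt_state_def)

lemma mt_step_counts:
  "fst (fst (mt_step Z cs \<omega> st)) =
    (case snd (mt_step Z cs \<omega> st) of None \<Rightarrow> fst st | Some c \<Rightarrow> bump (fst st) c)"
  by (cases st) (auto simp: mt_step_def split: list.splits option.splits)

lemma mt_step_return:
  "snd (mt_step Z cs \<omega> st) = None \<Longrightarrow> snd (fst (mt_step Z cs \<omega> st)) = tl (snd st)"
  by (cases st) (auto simp: mt_step_def split: list.splits option.splits)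

lemma mt_step_call:
  "snd (mt_step Z cs \<omega> st) = Some c \<Longrightarrow> c \<in> set cs \<and> active Z (assign \<omega> (fst st)) c"
  by (cases st) (auto simp: mt_step_def find_Some_iff split: list.splits option.splits)

lemma mt_step_halt:
  "snd st = [] \<Longrightarrow> snd (mt_step Z cs \<omega> st) = None \<Longrightarrow> \<forall>c\<in>set cs. \<not> active Z (assign \<omega> (fst st)) c"
  by (cases st) (auto simp: mt_step_def find_None_iff split: option.splits)

lemma resample_counts_Suc:
  "resample_counts call (Suc n) e =
    resample_counts call n e + (if \<exists>c. call n = Some c \<and> e \<in> sc c then 1 else 0)"
proof -
  have "{s. s < Suc n \<and> (\<exists>c. call s = Some c \<and> e \<in> sc c)} =
      {s. s < n \<and> (\<exists>c. call s = Some c \<and> e \<in> sc c)} \<union>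
      (if \<exists>c. call n = Some c \<and> e \<in> sc c then {n} else {})"
    by (auto simp: less_Suc_eq)
  then show ?thesis unfolding resample_counts_def by (simp add: card_Un_disjoint)
qed

lemma mt_state_counts: "fst (mt_state Z cs \<omega> n) = resample_counts (call_seq Z cs \<omega>) n"
proof (induction n)
  case 0
  show ?case by (simp add: mt_state_0 resample_counts_def)
next
  case (Suc n)
  show ?case
  proof
    fix e
    show "fst (mt_state Z cs \<omega> (Suc n)) e = resample_counts (call_seq Z cs \<omega>) (Suc n) e"
      unfolding mt_state_Suc mt_step_counts resample_counts_Suc Suc.IH[symmetric]
      by (cases "call_seq Z cs \<omega> n") (auto simp: call_seq_def bump_def)
  qed
qed

lemma call_seq_active:
  assumes "call_seq Z cs \<omega> s = Some c"
  shows "c \<in> set cs \<and> active Z (\<lambda>e. \<omega> (e, resample_counts (call_seq Z cs \<omega>) s e)) c"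
  using mt_step_call[OF assms[unfolded call_seq_def]] mt_state_counts[of Z cs \<omega> s]
  by (simp add: assign_def)

lemma mt_terminates_if_calls_stop:
  assumes N: "\<And>n. n \<ge> N \<Longrightarrow> call_seq Z cs \<omega> n = None"
  shows "mt_terminates Z cs \<omega>"
proof -
  let ?l = "\<lambda>n. length (snd (mt_state Z cs \<omega> n))"
  have l: "?l (N + k) = ?l N - k" for k
  proof (induction k)
    case (Suc k)
    have "snd (mt_state Z cs \<omega> (N + Suc k)) = tl (snd (mt_state Z cs \<omega> (N + k)))"
      using mt_step_return[of Z cs \<omega> "mt_state Z cs \<omega> (N + k)"] N[of "N + k"]
      by (simp add: mt_state_Suc call_seq_def)
    then show ?case using Suc.IH by simp
  qed simp
  let ?n = "N + ?l N"
  have "snd (mt_state Z cs \<omega> ?n) = []" using l[of "?l N"] by simp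
  moreover have "call_seq Z cs \<omega> ?n = None" using N by simp
  ultimately have "mt_halted Z cs \<omega> ?n"
    unfolding mt_halted_def using mt_step_halt[of "mt_state Z cs \<omega> ?n" Z cs \<omega>]
    by (simp add: call_seq_def)
  then show ?thesis unfolding mt_terminates_def by blast
qed

lemma mt_output_correct:
  assumes "finite {t. call_seq Z cs \<omega> t \<noteq> None}"
  shows "mt_terminates Z cs \<omega> \<and> (\<forall>c\<in>set cs. \<not> active Z (mt_output Z cs \<omega>) c)"
proof -
  define N where "N = Suc (Max (insert 0 {t. call_seq Z cs \<omega> t \<noteq> None}))"
  have "call_seq Z cs \<omega> n = None" if "n \<ge> N" for n
  proof (rule ccontr)
    assume "call_seq Z cs \<omega> n \<noteq> None"
    then have "n \<le> Max (insert 0 {t. call_seq Z cs \<omega> t \<noteq> None})" using assms by (intro Max_ge) auto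
    then show False using that unfolding N_def by simp
  qed
  then have trm: "mt_terminates Z cs \<omega>" by (rule mt_terminates_if_calls_stop)
  then have "mt_halted Z cs \<omega> (LEAST n. mt_halted Z cs \<omega> n)"
    unfolding mt_terminates_def by (rule LeastI_ex)
  then show ?thesis using trm unfolding mt_halted_def mt_output_def by blast
qed

lemma resample_count_eq_SUP:
  "resample_count Z cs \<omega> A = (SUP n. of_nat (card {t. t < n \<and> call_seq Z cs \<omega> t = Some A}))"
proof -
  have "(\<Sum>t<n. if call_seq Z cs \<omega> t = Some A then 1 else 0 :: ennreal)
      = of_nat (card {t. t < n \<and> call_seq Z cs \<omega> t = Some A})" for n
    by (simp add: sum.If_cases lessThan_def Collect_conj_eq)
  then show ?thesis
    unfolding resample_count_def call_seq_def[symmetric] suminf_eq_SUP by simp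
qed

definition cycle_prob :: "nat \<Rightarrow> nat \<Rightarrow> real" where
  "cycle_prob m Z = card (active_quadruples m Z) / card (sample_values m Z) ^ 4"

definition witnesses_upto :: "nat \<Rightarrow> nat \<Rightarrow> nat \<Rightarrow> cand \<Rightarrow> nat \<Rightarrow> (edge \<times> nat \<Rightarrow> val) \<Rightarrow> ennreal" where
  "witnesses_upto \<gamma> \<kappa> Z A n \<omega> =
     (\<Sum>Ls\<in>stable_seqs (C4 \<gamma> \<kappa>) {A} n. indicator (witness_event Z ({A} # Ls)) \<omega>)"

text \<open>Distinct calls of \<open>RESAMPLE(A)\<close> have distinct witnesses, each of which occurred.\<close>

lemma card_calls_le_witnesses_upto:
  assumes cs: "set cs = C4 \<gamma> \<kappa>"
  shows "of_nat (card {t. t < n \<and> call_seq Z cs \<omega> t = Some A}) \<le> witnesses_upto \<gamma> \<kappa> Z A n \<omega>"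
proof -
  let ?call = "call_seq Z cs \<omega>"
  let ?S = "{Ls \<in> stable_seqs (C4 \<gamma> \<kappa>) {A} n. \<omega> \<in> witness_event Z ({A} # Ls)}"
  have in_C4: "c \<in> C4 \<gamma> \<kappa>" if "?call s = Some c" for s c
    using call_seq_active[OF that] cs by blast
  have le: "card {t. t < n \<and> ?call t = Some A} \<le> card ?S"
  proof (rule card_inj_on_le[where f = "\<lambda>t. tl (witness ?call t)"])
    show "inj_on (\<lambda>t. tl (witness ?call t)) {t. t < n \<and> ?call t = Some A}"
    proof (rule inj_onI, rule ccontr)
      fix t1 t2 assume t: "t1 \<in> {t. t < n \<and> ?call t = Some A}" "t2 \<in> {t. t < n \<and> ?call t = Some A}"
        and eq: "tl (witness ?call t1) = tl (witness ?call t2)" and "t1 \<noteq> t2"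
      then have "witness ?call t1 \<noteq> witness ?call t2" by (intro witness_inj) auto
      with eq show False using witness_Cons[of ?call t1 A] witness_Cons[of ?call t2 A] t by simp
    qed
    show "(\<lambda>t. tl (witness ?call t)) ` {t. t < n \<and> ?call t = Some A} \<subseteq> ?S"
    proof (rule image_subsetI)
      fix t assume t: "t \<in> {t. t < n \<and> ?call t = Some A}"
      then have w: "witness ?call t = {A} # tl (witness ?call t)"
        using witness_Cons[of ?call t A] by simp
      have "length (tl (witness ?call t)) \<le> n"
        using length_witness[of ?call t A] max_depth_le[of ?call t A] t by simp
      moreover have "stable_seq (C4 \<gamma> \<kappa>) {A} (tl (witness ?call t))"
        using stable_seq_witness[of ?call t A] t in_C4 by blast
      moreover have "\<omega> \<in> witness_event Z (witness ?call t)"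
        using witness_event_witness[of ?call t A Z \<omega>] t call_seq_active by blast
      ultimately show "tl (witness ?call t) \<in> ?S" using w by (simp add: stable_seqs_def)
    qed
  qed (simp add: finite_stable_seqs finite_C4)
  have "witnesses_upto \<gamma> \<kappa> Z A n \<omega> =
      (\<Sum>Ls\<in>stable_seqs (C4 \<gamma> \<kappa>) {A} n. if \<omega> \<in> witness_event Z ({A} # Ls) then 1 else 0)"
    unfolding witnesses_upto_def by (intro sum.cong refl) (simp add: indicator_def)
  also have "\<dots> = (\<Sum>Ls\<in>?S. 1)"
    by (rule sum.inter_filter[symmetric]) (rule finite_stable_seqs[OF finite_C4])
  finally show ?thesis using of_nat_mono[OF le] by simp
qed

definition witnesses :: "nat \<Rightarrow> nat \<Rightarrow> nat \<Rightarrow> cand \<Rightarrow> (edge \<times> nat \<Rightarrow> val) \<Rightarrow> ennreal" where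
  "witnesses \<gamma> \<kappa> Z A \<omega> = (SUP n. witnesses_upto \<gamma> \<kappa> Z A n \<omega>)"

lemma resample_count_le_witnesses:
  assumes "set cs = C4 \<gamma> \<kappa>"
  shows "resample_count Z cs \<omega> A \<le> witnesses \<gamma> \<kappa> Z A \<omega>"
  unfolding resample_count_eq_SUP witnesses_def
  by (intro SUP_mono) (use card_calls_le_witnesses_upto[OF assms] in blast)

lemma finite_calls_if_resample_count_finite:
  assumes "resample_count Z cs \<omega> A \<noteq> \<infinity>"
  shows "finite {t. call_seq Z cs \<omega> t = Some A}"
proof (rule ccontr)
  assume inf: "infinite {t. call_seq Z cs \<omega> t = Some A}"
  obtain k where k: "resample_count Z cs \<omega> A < of_nat k"
    using assms ennreal_Ex_less_of_nat by (auto simp: less_top)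
  obtain S where S: "S \<subseteq> {t. call_seq Z cs \<omega> t = Some A}" "finite S" "card S = k"
    using infinite_arbitrarily_large[OF inf] by blast
  define n where "n = Suc (Max (insert 0 S))"
  have "S \<subseteq> {t. t < n \<and> call_seq Z cs \<omega> t = Some A}"
  proof
    fix t assume t: "t \<in> S"
    have "t \<le> Max (insert 0 S)" using S(2) t by (intro Max_ge) auto
    then show "t \<in> {t. t < n \<and> call_seq Z cs \<omega> t = Some A}" using t S(1) unfolding n_def by auto
  qed
  moreover have "finite {t. t < n \<and> call_seq Z cs \<omega> t = Some A}" by simp
  ultimately have "k \<le> card {t. t < n \<and> call_seq Z cs \<omega> t = Some A}"
    using S(3) card_mono by blast
  then have "(of_nat k :: ennreal) \<le> of_nat (card {t. t < n \<and> call_seq Z cs \<omega> t = Some A})"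
    by (rule of_nat_mono)
  also have "\<dots> \<le> resample_count Z cs \<omega> A"
    unfolding resample_count_eq_SUP by (rule SUP_upper) simp
  finally show False using k by simp
qed

context
  fixes \<gamma> \<kappa> m Z :: nat and \<mu> :: real
  assumes Z: "Z \<ge> 1" and \<mu>: "0 \<le> \<mu>"
    and crit: "cluster_criterion (C4 \<gamma> \<kappa>) (cycle_prob m Z) \<mu>"
begin

lemma witnesses_upto_measurable:
  "A \<in> C4 \<gamma> \<kappa> \<Longrightarrow> witnesses_upto \<gamma> \<kappa> Z A n \<in> borel_measurable (table_space m Z)"
  unfolding witnesses_upto_def
  by (auto intro!: borel_measurable_sum borel_measurable_indicator
      sets_witness_event[OF stable_seq_Cons_layers])

lemma witnesses_upto_mono: "mono (\<lambda>n. witnesses_upto \<gamma> \<kappa> Z A n \<omega>)"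
proof (rule monoI)
  fix n n' :: nat assume "n \<le> n'"
  then show "witnesses_upto \<gamma> \<kappa> Z A n \<omega> \<le> witnesses_upto \<gamma> \<kappa> Z A n' \<omega>"
    unfolding witnesses_upto_def
    by (intro sum_mono2 finite_stable_seqs finite_C4) (auto simp: stable_seqs_def)
qed

lemma nn_integral_witnesses_upto:
  assumes A: "A \<in> C4 \<gamma> \<kappa>"
  shows "(\<integral>\<^sup>+ \<omega>. witnesses_upto \<gamma> \<kappa> Z A n \<omega> \<partial>table_space m Z) \<le> ennreal \<mu>"
proof -
  let ?p = "cycle_prob m Z" and ?S = "stable_seqs (C4 \<gamma> \<kappa>) {A} n"
  note layers = stable_seq_Cons_layers[OF A]
  have meas: "witness_event Z ({A} # Ls) \<in> sets (table_space m Z)" if "Ls \<in> ?S" for Ls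
    by (rule sets_witness_event[OF layers[OF that]])
  have p: "0 \<le> ?p" by (simp add: cycle_prob_def)
  have "(\<integral>\<^sup>+ \<omega>. witnesses_upto \<gamma> \<kappa> Z A n \<omega> \<partial>table_space m Z)
      = (\<Sum>Ls\<in>?S. \<integral>\<^sup>+ \<omega>. indicator (witness_event Z ({A} # Ls)) \<omega> \<partial>table_space m Z)"
    unfolding witnesses_upto_def by (rule nn_integral_sum) (use meas in simp)
  also have "\<dots> = (\<Sum>Ls\<in>?S. emeasure (table_space m Z) (witness_event Z ({A} # Ls)))"
    using meas by (intro sum.cong refl nn_integral_indicator)
  also have "\<dots> \<le> (\<Sum>Ls\<in>?S. ennreal (?p * seq_weight ?p Ls))"
    using emeasure_witness_event_le[OF layers Z]
    by (intro sum_mono) (simp add: cycle_prob_def seq_weight_def)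
  also have "\<dots> = ennreal (?p * (\<Sum>Ls\<in>?S. seq_weight ?p Ls))"
    using p by (simp add: sum_distrib_left seq_weight_def)
  also have "\<dots> \<le> ennreal \<mu>"
    using stable_seqs_weight_le[OF finite_C4 p \<mu> crit, of "{A}" n] A
    by (intro ennreal_leI) (simp add: disjoint_family_on_def)
  finally show ?thesis .
qed

lemma nn_integral_witnesses:
  assumes A: "A \<in> C4 \<gamma> \<kappa>"
  shows "(\<integral>\<^sup>+ \<omega>. witnesses \<gamma> \<kappa> Z A \<omega> \<partial>table_space m Z) \<le> ennreal \<mu>"
proof -
  have "(\<integral>\<^sup>+ \<omega>. witnesses \<gamma> \<kappa> Z A \<omega> \<partial>table_space m Z)
      = (SUP n. \<integral>\<^sup>+ \<omega>. witnesses_upto \<gamma> \<kappa> Z A n \<omega> \<partial>table_space m Z)"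
    unfolding witnesses_def using witnesses_upto_measurable[OF A] witnesses_upto_mono
    by (intro nn_integral_monotone_convergence_SUP) (auto simp: incseq_def le_fun_def mono_def)
  also have "\<dots> \<le> ennreal \<mu>"
    using nn_integral_witnesses_upto[OF A] by (intro SUP_least) auto
  finally show ?thesis .
qed

lemma AE_witnesses_finite: "AE \<omega> in table_space m Z. \<forall>A\<in>C4 \<gamma> \<kappa>. witnesses \<gamma> \<kappa> Z A \<omega> \<noteq> \<infinity>"
proof (rule AE_finite_allI[OF finite_C4])
  fix A assume A: "A \<in> C4 \<gamma> \<kappa>"
  have "witnesses \<gamma> \<kappa> Z A \<in> borel_measurable (table_space m Z)"
    unfolding witnesses_def using witnesses_upto_measurable[OF A] by measurable
  then show "AE \<omega> in table_space m Z. witnesses \<gamma> \<kappa> Z A \<omega> \<noteq> \<infinity>"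
    by (rule nn_integral_PInf_AE) (use nn_integral_witnesses[OF A] in \<open>auto simp: top_unique\<close>)
qed

theorem moser_tardos_bound:
  assumes cs: "set cs = C4 \<gamma> \<kappa>"
  shows "(AE \<omega> in table_space m Z. mt_terminates Z cs \<omega> \<and> (\<forall>c\<in>C4 \<gamma> \<kappa>. \<not> active Z (mt_output Z cs \<omega>) c))
    \<and> (\<Sum>c\<in>C4 \<gamma> \<kappa>. \<integral>\<^sup>+ \<omega>. resample_count Z cs \<omega> c \<partial>table_space m Z) \<le> ennreal (card (C4 \<gamma> \<kappa>) * \<mu>)"
proof
  show "AE \<omega> in table_space m Z. mt_terminates Z cs \<omega> \<and> (\<forall>c\<in>C4 \<gamma> \<kappa>. \<not> active Z (mt_output Z cs \<omega>) c)"
    using AE_witnesses_finite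
  proof (rule AE_mp, intro AE_I2 impI)
    fix \<omega> assume "\<forall>A\<in>C4 \<gamma> \<kappa>. witnesses \<gamma> \<kappa> Z A \<omega> \<noteq> \<infinity>"
    then have "finite {t. call_seq Z cs \<omega> t = Some A}" if "A \<in> C4 \<gamma> \<kappa>" for A
      using that resample_count_le_witnesses[OF cs, of Z \<omega> A]
      by (intro finite_calls_if_resample_count_finite) (auto simp: top_unique)
    then have "finite (\<Union>A\<in>C4 \<gamma> \<kappa>. {t. call_seq Z cs \<omega> t = Some A})"
      by (simp add: finite_C4)
    moreover have "{t. call_seq Z cs \<omega> t \<noteq> None} \<subseteq> (\<Union>A\<in>C4 \<gamma> \<kappa>. {t. call_seq Z cs \<omega> t = Some A})"
    proof
      fix t assume "t \<in> {t. call_seq Z cs \<omega> t \<noteq> None}"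
      then obtain c where "call_seq Z cs \<omega> t = Some c" by auto
      then show "t \<in> (\<Union>A\<in>C4 \<gamma> \<kappa>. {t. call_seq Z cs \<omega> t = Some A})"
        using call_seq_active[of Z cs \<omega> t c] cs by auto
    qed
    ultimately have "finite {t. call_seq Z cs \<omega> t \<noteq> None}" by (rule finite_subset[rotated])
    then show "mt_terminates Z cs \<omega> \<and> (\<forall>c\<in>C4 \<gamma> \<kappa>. \<not> active Z (mt_output Z cs \<omega>) c)"
      using mt_output_correct cs by blast
  qed
  have "(\<Sum>c\<in>C4 \<gamma> \<kappa>. \<integral>\<^sup>+ \<omega>. resample_count Z cs \<omega> c \<partial>table_space m Z) \<le> (\<Sum>c\<in>C4 \<gamma> \<kappa>. ennreal \<mu>)"
  proof (rule sum_mono)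
    fix c assume c: "c \<in> C4 \<gamma> \<kappa>"
    have "(\<integral>\<^sup>+ \<omega>. resample_count Z cs \<omega> c \<partial>table_space m Z)
        \<le> (\<integral>\<^sup>+ \<omega>. witnesses \<gamma> \<kappa> Z c \<omega> \<partial>table_space m Z)"
      by (rule nn_integral_mono) (rule resample_count_le_witnesses[OF cs])
    also have "\<dots> \<le> ennreal \<mu>" by (rule nn_integral_witnesses[OF c])
    finally show "(\<integral>\<^sup>+ \<omega>. resample_count Z cs \<omega> c \<partial>table_space m Z) \<le> ennreal \<mu>" .
  qed
  also have "\<dots> = ennreal (card (C4 \<gamma> \<kappa>) * \<mu>)"
    using \<mu> by (simp add: ennreal_mult' ennreal_of_nat_eq_real_of_nat)
  finally show "(\<Sum>c\<in>C4 \<gamma> \<kappa>. \<integral>\<^sup>+ \<omega>. resample_count Z cs \<omega> c \<partial>table_space m Z) \<le> ennreal (card (C4 \<gamma> \<kappa>) * \<mu>)" .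
qed

end

subsection \<open>Counting candidates\<close>

definition ordered_pairs :: "nat \<Rightarrow> (nat \<times> nat) set" where
  "ordered_pairs n = {(a, b). a < b \<and> b < n}"

definition row_pair :: "cand \<Rightarrow> nat \<times> nat" where
  "row_pair B = (fst (snd B), snd (snd (snd B)))"

definition col_pair :: "cand \<Rightarrow> nat \<times> nat" where
  "col_pair B = (fst B, fst (snd (snd B)))"

definition through_avoiding :: "nat \<Rightarrow> nat set \<Rightarrow> nat \<times> nat \<Rightarrow> bool" where
  "through_avoiding x Y p \<longleftrightarrow> (fst p = x \<or> snd p = x) \<and> fst p \<notin> Y \<and> snd p \<notin> Y"

lemma finite_ordered_pairs: "finite (ordered_pairs n)"
  by (rule finite_subset[of _ "{..<n} \<times> {..<n}"]) (auto simp: ordered_pairs_def)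

lemma card_ordered_pairs: "card (ordered_pairs n) = n choose 2"
proof (induction n)
  case (Suc n)
  have "ordered_pairs (Suc n) = ordered_pairs n \<union> (\<lambda>a. (a, n)) ` {..<n}"
    by (auto simp: ordered_pairs_def less_Suc_eq)
  moreover have "ordered_pairs n \<inter> (\<lambda>a. (a, n)) ` {..<n} = {}"
    by (auto simp: ordered_pairs_def)
  ultimately have "card (ordered_pairs (Suc n)) = card (ordered_pairs n) + n"
    using finite_ordered_pairs by (simp add: card_Un_disjoint card_image inj_on_def)
  then show ?case using Suc.IH by (simp add: numeral_2_eq_2)
qed (simp add: ordered_pairs_def)

text \<open>A pair through \<open>x\<close> is determined by its other endpoint.\<close>

lemma card_pairs_through_avoiding:
  assumes "x < n" "x \<notin> Y" "Y \<subseteq> {..<n}"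
  shows "card {p\<in>ordered_pairs n. through_avoiding x Y p} \<le> n - 1 - card Y"
proof -
  let ?f = "\<lambda>p. if fst p = x then snd p else fst p"
  have "card {p\<in>ordered_pairs n. through_avoiding x Y p} \<le> card ({..<n} - insert x Y)"
    by (rule card_inj_on_le[where f = ?f])
      (auto simp: inj_on_def ordered_pairs_def through_avoiding_def split: if_splits)
  also have "\<dots> = n - 1 - card Y"
    using assms finite_subset[OF assms(3)] by (simp add: card_Diff_subset)
  finally show ?thesis .
qed

lemma card_pairs_meeting:
  assumes "x < y" "y < n"
  shows "card {p\<in>ordered_pairs n. fst p = x \<or> snd p = x \<or> fst p = y \<or> snd p = y} \<le> 2 * n - 3"
proof -
  let ?X = "{p\<in>ordered_pairs n. through_avoiding x {} p}"
  let ?Y = "{p\<in>ordered_pairs n. through_avoiding y {x} p}"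
  have X: "card ?X \<le> n - 1 - card ({} :: nat set)"
    using assms by (intro card_pairs_through_avoiding) auto
  have Y: "card ?Y \<le> n - 1 - card {x}"
    using assms by (intro card_pairs_through_avoiding) auto
  have "card {p\<in>ordered_pairs n. fst p = x \<or> snd p = x \<or> fst p = y \<or> snd p = y} \<le> card (?X \<union> ?Y)"
    using finite_ordered_pairs by (intro card_mono) (auto simp: through_avoiding_def)
  also have "\<dots> \<le> card ?X + card ?Y" by (rule card_Un_le)
  finally show ?thesis using X Y assms by simp
qed

lemma card_C4_le_pairs:
  "card {B\<in>C4 \<gamma> \<kappa>. R (row_pair B) \<and> Q (col_pair B)}
    \<le> card {p\<in>ordered_pairs \<gamma>. R p} * card {p\<in>ordered_pairs \<kappa>. Q p}"
proof -
  have fin: "finite ({p\<in>ordered_pairs \<gamma>. R p} \<times> {p\<in>ordered_pairs \<kappa>. Q p})"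
    using finite_ordered_pairs by simp
  have "card {B\<in>C4 \<gamma> \<kappa>. R (row_pair B) \<and> Q (col_pair B)}
      \<le> card ({p\<in>ordered_pairs \<gamma>. R p} \<times> {p\<in>ordered_pairs \<kappa>. Q p})"
    by (rule card_inj_on_le[where f = "\<lambda>B. (row_pair B, col_pair B)"])
      (use fin in \<open>auto simp: inj_on_def row_pair_def col_pair_def C4_def ordered_pairs_def\<close>)
  then show ?thesis by (simp add: card_cartesian_product)
qed

lemma card_C4: "card (C4 \<gamma> \<kappa>) \<le> (\<gamma> choose 2) * (\<kappa> choose 2)"
  using card_C4_le_pairs[of \<gamma> \<kappa> "\<lambda>_. True" "\<lambda>_. True"] by (simp add: card_ordered_pairs)

lemma mem_sc_iff:
  "(i, j) \<in> sc B \<longleftrightarrow> (i = fst (row_pair B) \<or> i = snd (row_pair B)) \<and> (j = fst (col_pair B) \<or> j = snd (col_pair B))"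
  by (cases B) (auto simp: sc_def row_pair_def col_pair_def)

text \<open>A candidate sharing an edge with \<open>B\<close> uses a row of \<open>B\<close> and a column of \<open>B\<close>.\<close>

lemma card_neighbourhood_C4:
  assumes B: "B \<in> C4 \<gamma> \<kappa>"
  shows "card (C4 \<gamma> \<kappa> \<inter> neighbourhood {B}) \<le> (2 * \<gamma> - 3) * (2 * \<kappa> - 3)"
proof -
  obtain j1 i1 j2 i2 where B_def: "B = (j1, i1, j2, i2)" by (cases B)
  have c: "i1 < i2" "i2 < \<gamma>" "j1 < j2" "j2 < \<kappa>" using B unfolding B_def C4_def by auto
  let ?R = "\<lambda>p. fst p = i1 \<or> snd p = i1 \<or> fst p = i2 \<or> snd p = i2"
  let ?Q = "\<lambda>p. fst p = j1 \<or> snd p = j1 \<or> fst p = j2 \<or> snd p = j2"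
  have "C4 \<gamma> \<kappa> \<inter> neighbourhood {B} \<subseteq> {B'\<in>C4 \<gamma> \<kappa>. ?R (row_pair B') \<and> ?Q (col_pair B')}"
  proof
    fix B' assume "B' \<in> C4 \<gamma> \<kappa> \<inter> neighbourhood {B}"
    then obtain i j where "B' \<in> C4 \<gamma> \<kappa>" "(i, j) \<in> sc B'" "(i, j) \<in> sc B"
      unfolding neighbourhood_def by auto
    then show "B' \<in> {B'\<in>C4 \<gamma> \<kappa>. ?R (row_pair B') \<and> ?Q (col_pair B')}"
      using mem_sc_iff[of i j B'] mem_sc_iff[of i j B] unfolding B_def row_pair_def col_pair_def by auto
  qed
  then have "card (C4 \<gamma> \<kappa> \<inter> neighbourhood {B}) \<le> card {B'\<in>C4 \<gamma> \<kappa>. ?R (row_pair B') \<and> ?Q (col_pair B')}"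
    by (intro card_mono) (simp_all add: finite_C4)
  also have "\<dots> \<le> card {p\<in>ordered_pairs \<gamma>. ?R p} * card {p\<in>ordered_pairs \<kappa>. ?Q p}"
    by (rule card_C4_le_pairs)
  also have "\<dots> \<le> (2 * \<gamma> - 3) * (2 * \<kappa> - 3)"
    using c by (intro mult_le_mono card_pairs_meeting)
  finally show ?thesis .
qed

subsection \<open>The criterion from the dependency degree\<close>

lemma cluster_criterion_degree:
  fixes p \<mu> :: real
  assumes p: "0 \<le> p" and \<mu>: "0 \<le> \<mu>" and key: "p * (1 + \<mu>) ^ ((2 * \<gamma> - 3) * (2 * \<kappa> - 3)) \<le> \<mu>"
  shows "cluster_criterion (C4 \<gamma> \<kappa>) p \<mu>"
  unfolding cluster_criterion_def
proof (intro allI impI)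
  fix I assume I: "I \<subseteq> C4 \<gamma> \<kappa>"
  let ?D = "(2 * \<gamma> - 3) * (2 * \<kappa> - 3)" and ?N = "C4 \<gamma> \<kappa> \<inter> neighbourhood I"
  have fin: "finite I" "finite ?N" using I finite_C4 finite_subset by blast+
  have "?N = (\<Union>B\<in>I. C4 \<gamma> \<kappa> \<inter> neighbourhood {B})"
    by (auto simp: neighbourhood_def)
  then have "card ?N \<le> (\<Sum>B\<in>I. card (C4 \<gamma> \<kappa> \<inter> neighbourhood {B}))"
    using card_UN_le[OF fin(1), of "\<lambda>B. C4 \<gamma> \<kappa> \<inter> neighbourhood {B}"] by simp
  also have "\<dots> \<le> (\<Sum>B\<in>I. ?D)"
    using card_neighbourhood_C4 I by (intro sum_mono) auto
  finally have card_N: "card ?N \<le> card I * ?D" by simp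
  have "(\<Sum>L\<in>next_layers (C4 \<gamma> \<kappa>) I. \<mu> ^ card L) \<le> (\<Sum>L\<in>Pow ?N. \<mu> ^ card L)"
    using fin \<mu> by (intro sum_mono2) (auto simp: next_layers_def simp del: Pow_Int_eq)
  also have "\<dots> = (1 + \<mu>) ^ card ?N"
    using prod_add[OF fin(2), of "\<lambda>_. \<mu>" "\<lambda>_. 1"] by (simp add: add.commute)
  also have "\<dots> \<le> (1 + \<mu>) ^ (card I * ?D)"
    using \<mu> card_N by (intro power_increasing) auto
  finally have "p ^ card I * (\<Sum>L\<in>next_layers (C4 \<gamma> \<kappa>) I. \<mu> ^ card L) \<le> p ^ card I * (1 + \<mu>) ^ (card I * ?D)"
    using p by (simp add: mult_left_mono)
  also have "\<dots> = (p * (1 + \<mu>) ^ ?D) ^ card I"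
    by (simp add: power_mult_distrib power_mult[symmetric] mult.commute)
  also have "\<dots> \<le> \<mu> ^ card I"
    using key p \<mu> by (intro power_mono) auto
  finally show "p ^ card I * (\<Sum>L\<in>next_layers (C4 \<gamma> \<kappa>) I. \<mu> ^ card L) \<le> \<mu> ^ card I" .
qed

subsection \<open>The criterion from local counting\<close>

definition lex_le :: "'a::linorder \<times> 'b::linorder \<Rightarrow> 'a \<times> 'b \<Rightarrow> bool" where
  "lex_le e e' \<longleftrightarrow> fst e < fst e' \<or> (fst e = fst e' \<and> snd e \<le> snd e')"

definition lex_min :: "('a::linorder \<times> 'b::linorder) set \<Rightarrow> 'a \<times> 'b" where
  "lex_min S = (let i = Min (fst ` S) in (i, Min (snd ` {e\<in>S. fst e = i})))"

lemma lex_min_mem: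
  assumes "finite S" "S \<noteq> {}"
  shows "lex_min S \<in> S"
proof -
  let ?i = "Min (fst ` S)"
  have "?i \<in> fst ` S" using assms by (intro Min_in) auto
  then have "{e\<in>S. fst e = ?i} \<noteq> {}" by force
  then have "Min (snd ` {e\<in>S. fst e = ?i}) \<in> snd ` {e\<in>S. fst e = ?i}"
    using assms by (intro Min_in) auto
  then obtain e where "e \<in> S" "fst e = ?i" "snd e = Min (snd ` {e\<in>S. fst e = ?i})" by auto
  then have "lex_min S = e" unfolding lex_min_def Let_def by (cases e) auto
  then show ?thesis using \<open>e \<in> S\<close> by simp
qed

lemma lex_min_le:
  assumes "finite S" "e' \<in> S"
  shows "lex_le (lex_min S) e'"
proof (cases "fst e' = Min (fst ` S)")
  case True
  then have "Min (snd ` {e\<in>S. fst e = Min (fst ` S)}) \<le> snd e'" using assms by (intro Min_le) auto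
  then show ?thesis using True unfolding lex_le_def lex_min_def Let_def by simp
next
  case False
  moreover have "Min (fst ` S) \<le> fst e'" using assms by (intro Min_le) auto
  ultimately have "Min (fst ` S) < fst e'" by (simp add: order.strict_iff_order)
  then show ?thesis unfolding lex_le_def lex_min_def Let_def by simp
qed

definition first_edge :: "cand set \<Rightarrow> cand \<Rightarrow> edge" where
  "first_edge I B' = lex_min (sc B' \<inter> \<Union>(sc ` I))"

definition entering_at :: "nat \<Rightarrow> nat \<Rightarrow> edge set \<Rightarrow> edge \<Rightarrow> cand set" where
  "entering_at \<gamma> \<kappa> E e = {B'\<in>C4 \<gamma> \<kappa>. e \<in> sc B' \<and> (\<forall>e'\<in>sc B' \<inter> E. lex_le e e')}"

text \<open>A layer over \<open>I\<close> is encoded by recording, at each edge of \<open>I\<close>, the member of the layer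
  (if any) whose lexicographically first edge in \<open>I\<close> it is.\<close>

definition layer_code :: "cand set \<Rightarrow> cand set \<Rightarrow> edge \<Rightarrow> cand option" where
  "layer_code I L = (\<lambda>e\<in>\<Union>(sc ` I).
     if \<exists>B'\<in>L. first_edge I B' = e then Some (THE B'. B' \<in> L \<and> first_edge I B' = e) else None)"

lemma finite_entering_at: "finite (entering_at \<gamma> \<kappa> E e)"
  unfolding entering_at_def using finite_C4 by simp

lemma entering_at_antimono: "E \<subseteq> E' \<Longrightarrow> entering_at \<gamma> \<kappa> E' e \<subseteq> entering_at \<gamma> \<kappa> E e"
  unfolding entering_at_def by blast

context
  fixes \<gamma> \<kappa> :: nat and I L :: "cand set"
  assumes I: "I \<subseteq> C4 \<gamma> \<kappa>" and L: "L \<in> next_layers (C4 \<gamma> \<kappa>) I"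
begin

private lemma finite_edges: "finite (\<Union>(sc ` I))"
  using I finite_C4 finite_subset finite_sc by blast

lemma first_edge_mem: "B' \<in> L \<Longrightarrow> first_edge I B' \<in> sc B' \<inter> \<Union>(sc ` I)"
  unfolding first_edge_def using L finite_edges
  by (intro lex_min_mem) (auto simp: next_layers_def neighbourhood_def)

lemma first_edge_eq: "B1 \<in> L \<Longrightarrow> B2 \<in> L \<Longrightarrow> first_edge I B1 = first_edge I B2 \<Longrightarrow> B1 = B2"
proof (rule ccontr)
  assume B: "B1 \<in> L" "B2 \<in> L" "first_edge I B1 = first_edge I B2" "B1 \<noteq> B2"
  then have "sc B1 \<inter> sc B2 \<noteq> {}" using first_edge_mem[OF B(1)] first_edge_mem[OF B(2)] by auto
  then show False using L B unfolding next_layers_def disjoint_family_on_def by blast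
qed

lemma layer_code_Some:
  assumes B': "B' \<in> L"
  shows "layer_code I L (first_edge I B') = Some B'"
proof -
  have "(THE B''. B'' \<in> L \<and> first_edge I B'' = first_edge I B') = B'"
    using first_edge_eq B' by (intro the_equality) auto
  then show ?thesis unfolding layer_code_def using first_edge_mem[OF B'] B' by auto
qed

lemma layer_code_SomeD:
  assumes e: "e \<in> \<Union>(sc ` I)" and code: "layer_code I L e = Some B'"
  shows "B' \<in> L \<and> first_edge I B' = e"
proof -
  have ex: "\<exists>B''\<in>L. first_edge I B'' = e" using e code unfolding layer_code_def by (auto split: if_splits)
  then obtain B0 where B0: "B0 \<in> L" "first_edge I B0 = e" by blast
  have "(THE B''. B'' \<in> L \<and> first_edge I B'' = e) = B0"
    using first_edge_eq B0 by (intro the_equality) auto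
  then have "B' = B0" using code e ex unfolding layer_code_def by auto
  then show ?thesis using B0 by simp
qed

lemma layer_code_PiE:
  "layer_code I L \<in> (\<Pi>\<^sub>E e\<in>\<Union>(sc ` I). insert None (Some ` entering_at \<gamma> \<kappa> (\<Union>(sc ` I)) e))"
proof -
  have "layer_code I L e \<in> insert None (Some ` entering_at \<gamma> \<kappa> (\<Union>(sc ` I)) e)"
    if e: "e \<in> \<Union>(sc ` I)" for e
  proof (cases "layer_code I L e")
    case (Some B')
    then have B': "B' \<in> L" "first_edge I B' = e" using layer_code_SomeD e by auto
    have "B' \<in> C4 \<gamma> \<kappa>" using L B'(1) by (auto simp: next_layers_def)
    moreover have "lex_le e e'" if "e' \<in> sc B' \<inter> \<Union>(sc ` I)" for e'
      using lex_min_le[OF _ that] finite_edges B'(2) unfolding first_edge_def by simp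
    ultimately have "B' \<in> entering_at \<gamma> \<kappa> (\<Union>(sc ` I)) e"
      unfolding entering_at_def using first_edge_mem[OF B'(1)] B'(2) by auto
    then show ?thesis using Some by simp
  qed simp
  moreover have "layer_code I L \<in> extensional (\<Union>(sc ` I))" unfolding layer_code_def by simp
  ultimately show ?thesis by (auto simp: PiE_def Pi_def)
qed

lemma layer_recover: "L = {B'. \<exists>e\<in>\<Union>(sc ` I). layer_code I L e = Some B'}"
proof (intro equalityI subsetI)
  fix B' assume "B' \<in> L"
  then show "B' \<in> {B'. \<exists>e\<in>\<Union>(sc ` I). layer_code I L e = Some B'}"
    using layer_code_Some first_edge_mem by blast
next
  fix B' assume "B' \<in> {B'. \<exists>e\<in>\<Union>(sc ` I). layer_code I L e = Some B'}"
  then show "B' \<in> L" using layer_code_SomeD by blast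
qed

lemma layer_weight_eq_code:
  "\<mu> ^ card L = (\<Prod>e\<in>\<Union>(sc ` I). case layer_code I L e of None \<Rightarrow> 1 | Some _ \<Rightarrow> \<mu>)"
proof -
  have "(\<Prod>e\<in>\<Union>(sc ` I). case layer_code I L e of None \<Rightarrow> 1 | Some _ \<Rightarrow> \<mu>)
      = (\<Prod>e\<in>\<Union>(sc ` I). if e \<in> first_edge I ` L then \<mu> else 1)"
  proof (rule prod.cong[OF refl])
    fix e assume e: "e \<in> \<Union>(sc ` I)"
    show "(case layer_code I L e of None \<Rightarrow> 1 | Some _ \<Rightarrow> \<mu>) = (if e \<in> first_edge I ` L then \<mu> else 1)"
    proof (cases "layer_code I L e")
      case None
      then have "e \<notin> first_edge I ` L" using layer_code_Some by force
      then show ?thesis using None by simp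
    next
      case (Some B')
      then have "B' \<in> L" "first_edge I B' = e" using layer_code_SomeD[OF e] by blast+
      then have "e \<in> first_edge I ` L" by blast
      then show ?thesis using Some by simp
    qed
  qed
  also have "\<dots> = \<mu> ^ card (first_edge I ` L)"
  proof -
    have "first_edge I ` L \<subseteq> \<Union>(sc ` I)" using first_edge_mem by blast
    then have "(\<Prod>e\<in>\<Union>(sc ` I). if e \<in> first_edge I ` L then \<mu> else 1) = (\<Prod>e\<in>first_edge I ` L. \<mu>)"
      using finite_edges by (intro prod.mono_neutral_cong_right) auto
    then show ?thesis by simp
  qed
  also have "card (first_edge I ` L) = card L"
    using first_edge_eq by (intro card_image inj_onI) auto
  finally show ?thesis by simp
qed

end

lemma layer_code_inj:
  assumes "I \<subseteq> C4 \<gamma> \<kappa>"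
  shows "inj_on (layer_code I) (next_layers (C4 \<gamma> \<kappa>) I)"
proof (rule inj_onI)
  fix L1 L2 assume L: "L1 \<in> next_layers (C4 \<gamma> \<kappa>) I" "L2 \<in> next_layers (C4 \<gamma> \<kappa>) I"
    and eq: "layer_code I L1 = layer_code I L2"
  have "L1 = {B'. \<exists>e\<in>\<Union>(sc ` I). layer_code I L1 e = Some B'}" by (rule layer_recover[OF assms L(1)])
  also have "\<dots> = L2" unfolding eq by (rule layer_recover[OF assms L(2), symmetric])
  finally show "L1 = L2" .
qed

lemma sum_option_weight:
  fixes \<mu> :: real
  assumes "finite A"
  shows "(\<Sum>x\<in>insert None (Some ` A). case x of None \<Rightarrow> 1 | Some _ \<Rightarrow> \<mu>) = 1 + \<mu> * card A"
  using assms by (simp add: sum.reindex card_image)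

lemma sum_next_layers_le_prod_edges:
  fixes \<mu> :: real
  assumes I: "I \<subseteq> C4 \<gamma> \<kappa>" and \<mu>: "0 \<le> \<mu>"
  shows "(\<Sum>L\<in>next_layers (C4 \<gamma> \<kappa>) I. \<mu> ^ card L)
    \<le> (\<Prod>e\<in>\<Union>(sc ` I). 1 + \<mu> * card (entering_at \<gamma> \<kappa> (\<Union>(sc ` I)) e))"
proof -
  let ?E = "\<Union>(sc ` I)" and ?X = "next_layers (C4 \<gamma> \<kappa>) I"
  let ?S = "\<lambda>e. insert None (Some ` entering_at \<gamma> \<kappa> ?E e)"
  let ?W = "\<lambda>f. \<Prod>e\<in>?E. case f e of None \<Rightarrow> 1 | Some _ \<Rightarrow> \<mu>"
  have fE: "finite ?E" using I finite_C4 finite_subset finite_sc by blast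
  have "(\<Sum>L\<in>?X. \<mu> ^ card L) = (\<Sum>L\<in>?X. ?W (layer_code I L))"
    using layer_weight_eq_code[OF I] by (intro sum.cong refl) blast
  also have "\<dots> = (\<Sum>f\<in>layer_code I ` ?X. ?W f)"
    by (rule sum.reindex[OF layer_code_inj[OF I], symmetric, unfolded comp_def])
  also have "\<dots> \<le> (\<Sum>f\<in>Pi\<^sub>E ?E ?S. ?W f)"
  proof (rule sum_mono2)
    show "finite (Pi\<^sub>E ?E ?S)" using fE finite_entering_at by (intro finite_PiE) auto
    show "layer_code I ` ?X \<subseteq> Pi\<^sub>E ?E ?S" using layer_code_PiE[OF I] by (rule image_subsetI)
    show "0 \<le> ?W f" for f :: "edge \<Rightarrow> cand option" using \<mu> by (intro prod_nonneg) (simp split: option.split)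
  qed
  also have "\<dots> = (\<Prod>e\<in>?E. \<Sum>x\<in>?S e. case x of None \<Rightarrow> 1 | Some _ \<Rightarrow> \<mu>)"
    by (rule prod_sum_PiE[symmetric]) (use fE finite_entering_at in auto)
  also have "\<dots> = (\<Prod>e\<in>?E. 1 + \<mu> * card (entering_at \<gamma> \<kappa> ?E e))"
    using sum_option_weight[OF finite_entering_at] by simp
  finally show ?thesis .
qed

text \<open>Edges of \<open>I\<close> belong to unique members of \<open>I\<close>, and enlarging the edge set under
  consideration only shrinks the sets \<open>entering_at\<close>.\<close>

lemma sum_next_layers_le_prod:
  fixes \<mu> :: real
  assumes I: "I \<subseteq> C4 \<gamma> \<kappa>" "disjoint_family_on sc I" and \<mu>: "0 \<le> \<mu>"
  shows "(\<Sum>L\<in>next_layers (C4 \<gamma> \<kappa>) I. \<mu> ^ card L)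
    \<le> (\<Prod>B\<in>I. \<Prod>e\<in>sc B. 1 + \<mu> * card (entering_at \<gamma> \<kappa> (sc B) e))"
proof -
  let ?E = "\<Union>(sc ` I)"
  have "(\<Prod>e\<in>?E. 1 + \<mu> * card (entering_at \<gamma> \<kappa> ?E e))
      = (\<Prod>B\<in>I. \<Prod>e\<in>sc B. 1 + \<mu> * card (entering_at \<gamma> \<kappa> ?E e))"
    using I finite_subset[OF I(1) finite_C4] finite_sc
    by (intro prod.UNION_disjoint) (auto simp: disjoint_family_on_def)
  also have "\<dots> \<le> (\<Prod>B\<in>I. \<Prod>e\<in>sc B. 1 + \<mu> * card (entering_at \<gamma> \<kappa> (sc B) e))"
  proof (intro prod_mono conjI)
    fix B e assume "B \<in> I"
    then have "card (entering_at \<gamma> \<kappa> ?E e) \<le> card (entering_at \<gamma> \<kappa> (sc B) e)"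
      using finite_entering_at by (intro card_mono entering_at_antimono) auto
    then show "1 + \<mu> * card (entering_at \<gamma> \<kappa> ?E e) \<le> 1 + \<mu> * card (entering_at \<gamma> \<kappa> (sc B) e)"
      using \<mu> by (simp add: mult_left_mono)
  qed (use \<mu> in \<open>auto intro: prod_nonneg\<close>)
  finally show ?thesis using sum_next_layers_le_prod_edges[OF I(1) \<mu>] by linarith
qed

text \<open>If a candidate through the corner \<open>(i, j)\<close> of \<open>B\<close> also used an earlier row or column
  of \<open>B\<close>, it would share a lexicographically smaller corner with \<open>B\<close>.\<close>

lemma entering_at_corner_subset:
  assumes B: "B = (j1, i1, j2, i2)" and ij: "i \<in> {i1, i2}" "j \<in> {j1, j2}"
  shows "entering_at \<gamma> \<kappa> (sc B) (i, j) \<subseteq> {B'\<in>C4 \<gamma> \<kappa>.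
     through_avoiding i {i'\<in>{i1, i2}. i' < i} (row_pair B') \<and>
     through_avoiding j {j'\<in>{j1, j2}. j' < j} (col_pair B')}"
proof
  fix B' assume B': "B' \<in> entering_at \<gamma> \<kappa> (sc B) (i, j)"
  then have ij': "(i, j) \<in> sc B'" and min: "\<And>e'. e' \<in> sc B' \<Longrightarrow> e' \<in> sc B \<Longrightarrow> lex_le (i, j) e'"
    by (auto simp: entering_at_def)
  have in_B: "(i', j') \<in> sc B" if "i' \<in> {i1, i2}" "j' \<in> {j1, j2}" for i' j'
    using that by (auto simp: B sc_def)
  have "i' \<noteq> fst (row_pair B') \<and> i' \<noteq> snd (row_pair B')" if "i' \<in> {i1, i2}" "i' < i" for i'
  proof -
    have "(i', j) \<notin> sc B'"
      using min[OF _ in_B[OF that(1) ij(2)]] that(2) by (auto simp: lex_le_def)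
    then show ?thesis using ij' by (auto simp: mem_sc_iff)
  qed
  moreover have "j' \<noteq> fst (col_pair B') \<and> j' \<noteq> snd (col_pair B')" if "j' \<in> {j1, j2}" "j' < j" for j'
  proof -
    have "(i, j') \<notin> sc B'"
      using min[OF _ in_B[OF ij(1) that(1)]] that(2) by (auto simp: lex_le_def)
    then show ?thesis using ij' by (auto simp: mem_sc_iff)
  qed
  moreover have "B' \<in> C4 \<gamma> \<kappa>" using B' by (simp add: entering_at_def)
  moreover have "i = fst (row_pair B') \<or> i = snd (row_pair B')" "j = fst (col_pair B') \<or> j = snd (col_pair B')"
    using ij' by (simp_all add: mem_sc_iff)
  ultimately show "B' \<in> {B'\<in>C4 \<gamma> \<kappa>.
     through_avoiding i {i'\<in>{i1, i2}. i' < i} (row_pair B') \<and>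
     through_avoiding j {j'\<in>{j1, j2}. j' < j} (col_pair B')}"
    by (auto simp: through_avoiding_def)
qed

lemma card_entering_at_corner:
  assumes B: "B = (j1, i1, j2, i2)" "B \<in> C4 \<gamma> \<kappa>" and ij: "i \<in> {i1, i2}" "j \<in> {j1, j2}"
  shows "card (entering_at \<gamma> \<kappa> (sc B) (i, j))
    \<le> (if i = i2 then \<gamma> - 2 else \<gamma> - 1) * (if j = j2 then \<kappa> - 2 else \<kappa> - 1)"
proof -
  let ?Yr = "{i'\<in>{i1, i2}. i' < i}" and ?Yc = "{j'\<in>{j1, j2}. j' < j}"
  have c: "i1 < i2" "i2 < \<gamma>" "j1 < j2" "j2 < \<kappa>" using B by (auto simp: C4_def)
  have Yr: "card ?Yr = (if i = i2 then 1 else 0)"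
  proof (cases "i = i2")
    case True
    then have "?Yr = {i1}" using c by auto
    then show ?thesis using True by simp
  next
    case False
    then have "?Yr = {}" using ij(1) c by auto
    then show ?thesis using False by simp
  qed
  have Yc: "card ?Yc = (if j = j2 then 1 else 0)"
  proof (cases "j = j2")
    case True
    then have "?Yc = {j1}" using c by auto
    then show ?thesis using True by simp
  next
    case False
    then have "?Yc = {}" using ij(2) c by auto
    then show ?thesis using False by simp
  qed
  have "card (entering_at \<gamma> \<kappa> (sc B) (i, j))
      \<le> card {B'\<in>C4 \<gamma> \<kappa>. through_avoiding i ?Yr (row_pair B') \<and> through_avoiding j ?Yc (col_pair B')}"
    by (rule card_mono[OF _ entering_at_corner_subset[OF B(1) ij]]) (simp add: finite_C4)
  also have "\<dots> \<le> card {p\<in>ordered_pairs \<gamma>. through_avoiding i ?Yr p} * card {p\<in>ordered_pairs \<kappa>. through_avoiding j ?Yc p}"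
    by (rule card_C4_le_pairs)
  also have "\<dots> \<le> (\<gamma> - 1 - card ?Yr) * (\<kappa> - 1 - card ?Yc)"
    using ij c by (intro mult_le_mono card_pairs_through_avoiding) auto
  finally show ?thesis unfolding Yr Yc by (simp add: numeral_2_eq_2 split: if_splits)
qed

text \<open>With \<open>x = 1 + (a b - 1) \<mu>\<close>, the outer and the inner pair of factors are each at most \<open>x\<^sup>2\<close>.\<close>

lemma four_corners_le:
  fixes a b \<mu> :: real
  assumes a: "a \<ge> 1" and b: "b \<ge> 1" and ab: "a + b \<ge> 3" and \<mu>: "\<mu> \<ge> 0"
  shows "(1 + \<mu> * (a * b)) * (1 + \<mu> * (a * (b - 1))) * (1 + \<mu> * ((a - 1) * b)) * (1 + \<mu> * ((a - 1) * (b - 1)))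
    \<le> (1 + (a * b - 1) * \<mu>) ^ 4"
proof -
  define x where "x = 1 + (a * b - 1) * \<mu>"
  have "a * b \<ge> 1" using a b mult_mono[of 1 a 1 b] by simp
  then have x: "x \<ge> 0" unfolding x_def using \<mu> by simp
  have "(1 + \<mu> * (a * b)) * (1 + \<mu> * ((a - 1) * (b - 1))) = x\<^sup>2 - (a + b - 3) * \<mu> * x - (a + b - 2) * \<mu>\<^sup>2"
    unfolding x_def by (simp add: algebra_simps power2_eq_square)
  moreover have "0 \<le> (a + b - 3) * \<mu> * x" "0 \<le> (a + b - 2) * \<mu>\<^sup>2" using ab \<mu> x by simp_all
  ultimately have outer: "(1 + \<mu> * (a * b)) * (1 + \<mu> * ((a - 1) * (b - 1))) \<le> x\<^sup>2" by linarith
  have "1 + \<mu> * (a * (b - 1)) \<le> x" "1 + \<mu> * ((a - 1) * b) \<le> x"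
    using a b \<mu> mult_left_mono[of 1 a \<mu>] mult_left_mono[of 1 b \<mu>] unfolding x_def by (simp_all add: algebra_simps)
  then have inner: "(1 + \<mu> * (a * (b - 1))) * (1 + \<mu> * ((a - 1) * b)) \<le> x * x"
    using a b \<mu> x by (intro mult_mono) simp_all
  have "(1 + \<mu> * (a * b)) * (1 + \<mu> * (a * (b - 1))) * (1 + \<mu> * ((a - 1) * b)) * (1 + \<mu> * ((a - 1) * (b - 1)))
      = ((1 + \<mu> * (a * b)) * (1 + \<mu> * ((a - 1) * (b - 1)))) * ((1 + \<mu> * (a * (b - 1))) * (1 + \<mu> * ((a - 1) * b)))"
    by (simp add: algebra_simps)
  also have "\<dots> \<le> x\<^sup>2 * (x * x)"
    by (rule mult_mono[OF outer inner]) (use a b \<mu> in \<open>auto intro!: mult_nonneg_nonneg\<close>)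
  finally show ?thesis unfolding x_def by (simp add: power2_eq_square power4_eq_xxxx)
qed

lemma prod_entering_at_le:
  fixes \<mu> :: real
  assumes B: "B \<in> C4 \<gamma> \<kappa>" and \<mu>: "0 \<le> \<mu>" and \<gamma>\<kappa>: "\<gamma> \<ge> 2" "\<kappa> \<ge> 2" "\<gamma> + \<kappa> \<ge> 5"
  shows "(\<Prod>e\<in>sc B. 1 + \<mu> * card (entering_at \<gamma> \<kappa> (sc B) e)) \<le> (1 + real (\<gamma> * \<kappa> - \<gamma> - \<kappa>) * \<mu>) ^ 4"
proof -
  obtain j1 i1 j2 i2 where B_def: "B = (j1, i1, j2, i2)" by (cases B)
  have c: "i1 < i2" "j1 < j2" using B unfolding B_def C4_def by auto
  define a b where "a = real \<gamma> - 1" and "b = real \<kappa> - 1"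
  define h where "h = (\<lambda>(i, j). 1 + \<mu> * real ((if i = i2 then \<gamma> - 2 else \<gamma> - 1) * (if j = j2 then \<kappa> - 2 else \<kappa> - 1)))"
  have "(\<Prod>e\<in>sc B. 1 + \<mu> * card (entering_at \<gamma> \<kappa> (sc B) e)) \<le> (\<Prod>e\<in>sc B. h e)"
  proof (rule prod_mono)
    fix e assume "e \<in> sc B"
    then obtain i j where e: "e = (i, j)" "i \<in> {i1, i2}" "j \<in> {j1, j2}" by (auto simp: B_def sc_def)
    show "0 \<le> 1 + \<mu> * card (entering_at \<gamma> \<kappa> (sc B) e) \<and> 1 + \<mu> * card (entering_at \<gamma> \<kappa> (sc B) e) \<le> h e"
      using of_nat_mono[OF card_entering_at_corner[OF B_def B e(2,3)]] \<mu>
      unfolding e h_def prod.case by (simp add: mult_left_mono del: of_nat_mult)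
  qed
  also have "(\<Prod>e\<in>sc B. h e) =
      (1 + \<mu> * (a * b)) * (1 + \<mu> * (a * (b - 1))) * (1 + \<mu> * ((a - 1) * b)) * (1 + \<mu> * ((a - 1) * (b - 1)))"
  proof -
    have "real (\<gamma> - 1) = a" "real (\<gamma> - 2) = a - 1" "real (\<kappa> - 1) = b" "real (\<kappa> - 2) = b - 1"
      using \<gamma>\<kappa> by (auto simp: a_def b_def)
    then show ?thesis using c by (simp add: B_def sc_def h_def mult.assoc)
  qed
  also have "\<dots> \<le> (1 + (a * b - 1) * \<mu>) ^ 4"
    using \<gamma>\<kappa> \<mu> by (intro four_corners_le) (simp_all add: a_def b_def)
  also have "a * b - 1 = real (\<gamma> * \<kappa> - \<gamma> - \<kappa>)"
  proof -
    have "\<gamma> + \<kappa> \<le> \<gamma> * \<kappa>"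
      using \<gamma>\<kappa> mult_le_mono1[of 2 \<gamma> \<kappa>] mult_le_mono2[of 2 \<kappa> \<gamma>] by linarith
    then show ?thesis unfolding a_def b_def by (simp add: algebra_simps)
  qed
  finally show ?thesis .
qed

lemma cluster_criterion_local:
  fixes p \<mu> :: real
  assumes p: "0 \<le> p" and \<mu>: "0 \<le> \<mu>" and \<gamma>\<kappa>: "\<gamma> \<ge> 2" "\<kappa> \<ge> 2" "\<gamma> + \<kappa> \<ge> 5"
    and key: "p * (1 + real (\<gamma> * \<kappa> - \<gamma> - \<kappa>) * \<mu>) ^ 4 \<le> \<mu>"
  shows "cluster_criterion (C4 \<gamma> \<kappa>) p \<mu>"
  unfolding cluster_criterion_def
proof (intro allI impI)
  fix I assume I: "I \<subseteq> C4 \<gamma> \<kappa>" "disjoint_family_on sc I"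
  let ?x = "1 + real (\<gamma> * \<kappa> - \<gamma> - \<kappa>) * \<mu>"
  have "(\<Sum>L\<in>next_layers (C4 \<gamma> \<kappa>) I. \<mu> ^ card L) \<le> (\<Prod>B\<in>I. \<Prod>e\<in>sc B. 1 + \<mu> * card (entering_at \<gamma> \<kappa> (sc B) e))"
    by (rule sum_next_layers_le_prod[OF I \<mu>])
  also have "\<dots> \<le> (\<Prod>B\<in>I. ?x ^ 4)"
    using I prod_entering_at_le[OF _ \<mu> \<gamma>\<kappa>] \<mu> by (intro prod_mono conjI prod_nonneg) auto
  finally have "p ^ card I * (\<Sum>L\<in>next_layers (C4 \<gamma> \<kappa>) I. \<mu> ^ card L) \<le> p ^ card I * (?x ^ 4) ^ card I"
    using p by (simp add: mult_left_mono)
  also have "\<dots> = (p * ?x ^ 4) ^ card I" by (simp add: power_mult_distrib)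
  also have "\<dots> \<le> \<mu> ^ card I" using key p \<mu> by (intro power_mono) auto
  finally show "p ^ card I * (\<Sum>L\<in>next_layers (C4 \<gamma> \<kappa>) I. \<mu> ^ card L) \<le> \<mu> ^ card I" .
qed

subsection \<open>Probability that a candidate is active\<close>

definition admissible_triples :: "nat \<Rightarrow> (nat \<times> nat \<times> nat) set" where
  "admissible_triples m = {(a, b, c). a \<le> m \<and> b \<le> m \<and> c \<le> m \<and> a \<le> b + c \<and> b + c \<le> a + m}"

lemma finite_admissible_triples: "finite (admissible_triples m)"
  by (rule finite_subset[of _ "{..m} \<times> {..m} \<times> {..m}"]) (auto simp: admissible_triples_def)

lemma add_mod_cancel_less:
  fixes x d d' Z :: nat
  assumes "d < Z" "d' < Z" "(x + d) mod Z = (x + d') mod Z"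
  shows "d = d'"
proof -
  have "Z dvd nat \<bar>int d - int d'\<bar>" using assms(3) by (simp add: mod_eq_iff_dvd_symdiff_nat)
  moreover have "nat \<bar>int d - int d'\<bar> < Z" using assms(1,2) by auto
  ultimately have "nat \<bar>int d - int d'\<bar> = 0" by (metis gr0I nat_dvd_not_less)
  then show ?thesis by simp
qed

text \<open>The fourth entry of an active quadruple is determined by the other three: its partition
  value by \<open>a + d = b + c\<close>, its lifting value by the congruence modulo \<open>Z\<close>.\<close>

lemma card_active_quadruples_le: "card (active_quadruples m Z) \<le> card (admissible_triples m) * Z ^ 3"
proof -
  let ?h = "\<lambda>(A :: val, B :: val, C :: val, D :: val). ((fst A, fst B, fst C), (snd A, snd B, snd C))"
  have "card (active_quadruples m Z) \<le> card (admissible_triples m \<times> ({..<Z} \<times> {..<Z} \<times> {..<Z}))"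
  proof (rule card_inj_on_le[where f = ?h])
    show "inj_on ?h (active_quadruples m Z)"
    proof (rule inj_onI)
      fix Q Q' assume Q: "Q \<in> active_quadruples m Z" "Q' \<in> active_quadruples m Z" and h: "?h Q = ?h Q'"
      obtain A B C D A' B' C' D' where QQ': "Q = (A, B, C, D)" "Q' = (A', B', C', D')"
        by (cases Q, cases Q') blast
      note X = Q(1)[unfolded QQ'(1)] and Y = Q(2)[unfolded QQ'(2)]
      note h = h[unfolded QQ']
      have ABC: "A = A'" "B = B'" "C = C'" using h by (simp_all add: prod_eq_iff)
      have X': "fst A + fst D = fst B + fst C" "(snd A + snd D) mod Z = (snd B + snd C) mod Z"
        "D \<in> sample_values m Z"
        using X by (simp_all add: active_quadruples_def)
      have Y': "fst A + fst D' = fst B + fst C" "(snd A + snd D') mod Z = (snd B + snd C) mod Z"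
        "D' \<in> sample_values m Z"
        using Y by (simp_all add: active_quadruples_def ABC)
      have "fst D = fst D'" using X'(1) Y'(1) by simp
      moreover have "snd D = snd D'"
      proof (rule add_mod_cancel_less[where Z = Z and x = "snd A"])
        show "snd D < Z" "snd D' < Z" using X'(3) Y'(3) by (auto simp: sample_values_def)
        show "(snd A + snd D) mod Z = (snd A + snd D') mod Z" using X'(2) Y'(2) by simp
      qed
      ultimately show "Q = Q'" using ABC QQ' by (simp add: prod_eq_iff)
    qed
    show "?h ` active_quadruples m Z \<subseteq> admissible_triples m \<times> ({..<Z} \<times> {..<Z} \<times> {..<Z})"
      by (auto simp: active_quadruples_def admissible_triples_def sample_values_def)
  qed (simp add: finite_admissible_triples)
  then show ?thesis by (simp add: card_cartesian_product power3_eq_cube)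
qed

definition absdiff :: "nat \<Rightarrow> nat \<Rightarrow> nat" where
  "absdiff a b = (a - b) + (b - a)"

lemma card_admissible_fiber:
  assumes "a \<le> m" "b \<le> m"
  shows "card {c. c \<le> m \<and> a \<le> b + c \<and> b + c \<le> a + m} = m + 1 - absdiff a b"
proof -
  have "{c. c \<le> m \<and> a \<le> b + c \<and> b + c \<le> a + m} = {a - b .. m - (b - a)}"
    using assms by auto
  then show ?thesis using assms by (simp add: absdiff_def)
qed

lemma sum_Suc_diff: "2 * (\<Sum>b\<le>m. Suc m - b) = (m + 1) * (m + 2)"
proof (induction m)
  case (Suc m)
  have "(\<Sum>b\<le>Suc m. Suc (Suc m) - b) = (\<Sum>b\<le>m. Suc (Suc m) - b) + 1"
    by (simp only: sum.atMost_Suc diff_self_eq_0)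
  also have "(\<Sum>b\<le>m. Suc (Suc m) - b) = (\<Sum>b\<le>m. Suc (Suc m - b))"
    by (intro sum.cong refl) (simp add: Suc_diff_le)
  also have "\<dots> = (\<Sum>b\<le>m. Suc m - b) + (m + 1)" by (simp only: sum_Suc card_atMost)
  finally show ?case using Suc.IH by (simp add: algebra_simps)
qed simp

lemma sum_absdiff: "3 * (\<Sum>a\<le>m. \<Sum>b\<le>m. absdiff a b) = m * (m + 1) * (m + 2)"
proof (induction m)
  case (Suc m)
  have "(\<Sum>a\<le>Suc m. \<Sum>b\<le>Suc m. absdiff a b)
      = (\<Sum>a\<le>m. \<Sum>b\<le>Suc m. absdiff a b) + (\<Sum>b\<le>Suc m. absdiff (Suc m) b)"
    by (simp only: sum.atMost_Suc)
  also have "(\<Sum>a\<le>m. \<Sum>b\<le>Suc m. absdiff a b) = (\<Sum>a\<le>m. (\<Sum>b\<le>m. absdiff a b) + (Suc m - a))"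
    by (intro sum.cong refl) (simp add: absdiff_def)
  also have "\<dots> = (\<Sum>a\<le>m. \<Sum>b\<le>m. absdiff a b) + (\<Sum>a\<le>m. Suc m - a)"
    by (simp only: sum.distrib)
  also have "(\<Sum>b\<le>Suc m. absdiff (Suc m) b) = (\<Sum>b\<le>m. Suc m - b)"
    by (simp add: absdiff_def)
  finally have "(\<Sum>a\<le>Suc m. \<Sum>b\<le>Suc m. absdiff a b) = (\<Sum>a\<le>m. \<Sum>b\<le>m. absdiff a b) + 2 * (\<Sum>b\<le>m. Suc m - b)"
    by simp
  then show ?case using Suc.IH sum_Suc_diff[of m] by (simp add: algebra_simps)
qed (simp add: absdiff_def)

lemma card_admissible_triples: "3 * card (admissible_triples m) = (m + 1) * (2 * m\<^sup>2 + 4 * m + 3)"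
proof -
  have "admissible_triples m = (SIGMA a:{..m}. SIGMA b:{..m}. {c. c \<le> m \<and> a \<le> b + c \<and> b + c \<le> a + m})"
    unfolding admissible_triples_def by auto
  then have "card (admissible_triples m) = (\<Sum>a\<le>m. \<Sum>b\<le>m. m + 1 - absdiff a b)"
    by (simp add: card_admissible_fiber)
  moreover have "(\<Sum>a\<le>m. \<Sum>b\<le>m. m + 1 - absdiff a b) + (\<Sum>a\<le>m. \<Sum>b\<le>m. absdiff a b) = (m + 1) ^ 3"
  proof -
    have "(\<Sum>a\<le>m. \<Sum>b\<le>m. m + 1 - absdiff a b) + (\<Sum>a\<le>m. \<Sum>b\<le>m. absdiff a b)
        = (\<Sum>a\<le>m. \<Sum>b\<le>m. (m + 1 - absdiff a b) + absdiff a b)"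
      by (simp only: sum.distrib)
    also have "\<dots> = (\<Sum>a\<le>m. \<Sum>b\<le>m. m + 1)"
      by (intro sum.cong refl) (auto simp: absdiff_def)
    finally show ?thesis by (simp add: power3_eq_cube)
  qed
  ultimately have "3 * card (admissible_triples m) + m * (m + 1) * (m + 2) = 3 * (m + 1) ^ 3"
    using sum_absdiff[of m] by linarith
  then show ?thesis by (simp add: algebra_simps power2_eq_square power3_eq_cube)
qed

lemma cycle_prob_le:
  assumes Z: "Z \<ge> 1"
  shows "cycle_prob m Z \<le> (2 * real m ^ 2 + 4 * real m + 3) / (3 * (real m + 1) ^ 3 * real Z)"
proof -
  let ?P = "2 * real m ^ 2 + 4 * real m + 3"
  have triples: "real (card (admissible_triples m)) = (real m + 1) * ?P / 3"
    using arg_cong[OF card_admissible_triples[of m], of real] by (simp add: algebra_simps)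
  have V: "real (card (sample_values m Z)) = (real m + 1) * real Z"
    by (simp add: card_sample_values algebra_simps)
  have "cycle_prob m Z \<le> real (card (admissible_triples m)) * real Z ^ 3 / ((real m + 1) * real Z) ^ 4"
    unfolding cycle_prob_def of_nat_power V
    using of_nat_mono[OF card_active_quadruples_le[of m Z]]
    by (intro divide_right_mono) simp_all
  also have "\<dots> = ?P / (3 * (real m + 1) ^ 3 * real Z)"
  proof -
    have "x * P / 3 * z ^ 3 / (x * z) ^ 4 = P / (3 * x ^ 3 * z)" if "x > 0" "z > 0" for x z P :: real
      using that by (simp add: field_simps power4_eq_xxxx power3_eq_cube)
    then show ?thesis unfolding triples using Z by simp
  qed
  finally show ?thesis .
qed

lemma moser_tardos_binomial_bound:
  assumes Z: "Z \<ge> 1" and cs: "set cs = C4 \<gamma> \<kappa>" and \<mu>: "0 \<le> \<mu>" "\<mu> \<le> \<beta>"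
    and crit: "cluster_criterion (C4 \<gamma> \<kappa>) (cycle_prob m Z) \<mu>"
  shows "(AE \<omega> in table_space m Z. mt_terminates Z cs \<omega> \<and> (\<forall>c\<in>C4 \<gamma> \<kappa>. \<not> active Z (mt_output Z cs \<omega>) c))
    \<and> (\<Sum>c\<in>C4 \<gamma> \<kappa>. \<integral>\<^sup>+ \<omega>. resample_count Z cs \<omega> c \<partial>table_space m Z)
      \<le> ennreal (real (\<gamma> choose 2) * real (\<kappa> choose 2) * \<beta>)"
proof -
  have "real (card (C4 \<gamma> \<kappa>)) * \<mu> \<le> real (\<gamma> choose 2) * real (\<kappa> choose 2) * \<beta>"
    using of_nat_mono[OF card_C4[of \<gamma> \<kappa>]] \<mu> by (intro mult_mono) auto
  then show ?thesis
    using moser_tardos_bound[OF Z \<mu>(1) crit cs] by (meson ennreal_leI order_trans)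
qed

lemma degree_key_inequality:
  fixes d :: nat and p :: real
  assumes d: "d \<ge> 1" and p: "p \<le> real d ^ d / real (Suc d) ^ Suc d"
  shows "p * (1 + 1 / real d) ^ Suc d \<le> 1 / real d"
proof -
  have d0: "real d > 0" using d by simp
  have "1 + 1 / real d = real (Suc d) / real d" using d0 by (simp add: field_simps)
  then have X: "(1 + 1 / real d) ^ Suc d = real (Suc d) ^ Suc d / real d ^ Suc d"
    by (simp only: power_divide)
  have "p * (1 + 1 / real d) ^ Suc d \<le> real d ^ d / real (Suc d) ^ Suc d * (1 + 1 / real d) ^ Suc d"
    by (rule mult_right_mono[OF p]) simp
  also have "\<dots> = real d ^ d / real d ^ Suc d"
    unfolding X using d0 by (simp del: of_nat_Suc)
  also have "\<dots> = 1 / real d" using d0 by (simp add: field_simps)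
  finally show ?thesis .
qed

lemma local_key_inequality:
  fixes n :: nat and p :: real
  assumes n: "n \<ge> 1" and p: "p \<le> 27 / (256 * real n)"
  shows "p * (1 + real n * (1 / (3 * real n))) ^ 4 \<le> 1 / (3 * real n)"
proof -
  have n0: "real n \<noteq> 0" using n by simp
  have e: "1 + real n * (1 / (3 * real n)) = 4 / 3" using n0 by (simp add: field_simps)
  have "p * (1 + real n * (1 / (3 * real n))) ^ 4 = p * (4 / 3) ^ 4" by (simp only: e)
  also have "\<dots> \<le> 27 / (256 * real n) * (4 / 3) ^ 4"
    using p by (intro mult_right_mono) simp_all
  also have "\<dots> = 1 / (3 * real n)"
    using n0 by (simp add: field_simps)
  finally show ?thesis .
qed

lemma dependency_degree_ge_3:
  fixes \<gamma> \<kappa> :: nat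
  assumes "\<gamma> \<ge> 2" "\<kappa> \<ge> 2" "\<gamma> * \<kappa> > \<gamma> + \<kappa>"
  shows "(2 * \<gamma> - 3) * (2 * \<kappa> - 3) \<ge> 3"
proof (cases "\<gamma> \<ge> 3")
  case True
  then have "2 * \<gamma> - 3 \<ge> 3" "2 * \<kappa> - 3 \<ge> 1" using assms(2) by auto
  then show ?thesis by (metis mult_le_mono nat_mult_1_right)
next
  case False
  then have "\<gamma> = 2" using assms(1) by simp
  then have "2 * \<kappa> - 3 \<ge> 3" using assms(3) by simp
  then show ?thesis using \<open>\<gamma> = 2\<close> by simp
qed

lemma moser_tardos_degree_case:
  assumes Z: "Z \<ge> 1" and cs: "set cs = C4 \<gamma> \<kappa>" and \<gamma>\<kappa>: "\<gamma> \<ge> 2" "\<kappa> \<ge> 2" "\<gamma> * \<kappa> > \<gamma> + \<kappa>"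
    and p: "cycle_prob m Z \<le> real ((2*\<gamma>-3)*(2*\<kappa>-3) - 1) ^ ((2*\<gamma>-3)*(2*\<kappa>-3) - 1)
      / real ((2*\<gamma>-3)*(2*\<kappa>-3)) ^ ((2*\<gamma>-3)*(2*\<kappa>-3))"
  shows "(AE \<omega> in table_space m Z. mt_terminates Z cs \<omega> \<and> (\<forall>c\<in>C4 \<gamma> \<kappa>. \<not> active Z (mt_output Z cs \<omega>) c))
    \<and> (\<Sum>c\<in>C4 \<gamma> \<kappa>. \<integral>\<^sup>+ \<omega>. resample_count Z cs \<omega> c \<partial>table_space m Z)
      \<le> ennreal (real (\<gamma> choose 2) * real (\<kappa> choose 2) / (real ((2*\<gamma>-3)*(2*\<kappa>-3)) - 2))"
proof -
  define d where "d = (2*\<gamma>-3)*(2*\<kappa>-3) - 1"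
  have d: "(2*\<gamma>-3)*(2*\<kappa>-3) = Suc d" "d \<ge> 2"
    using dependency_degree_ge_3[OF \<gamma>\<kappa>] by (simp_all add: d_def)
  have p0: "0 \<le> cycle_prob m Z" by (simp add: cycle_prob_def)
  have "cycle_prob m Z \<le> real d ^ d / real (Suc d) ^ Suc d"
    using p unfolding d(1) by (simp only: diff_Suc_1)
  then have "cycle_prob m Z * (1 + 1 / real d) ^ ((2*\<gamma>-3)*(2*\<kappa>-3)) \<le> 1 / real d"
    unfolding d(1) by (rule degree_key_inequality[rotated]) (use d(2) in simp)
  then have crit: "cluster_criterion (C4 \<gamma> \<kappa>) (cycle_prob m Z) (1 / real d)"
    by (rule cluster_criterion_degree[OF p0, rotated]) simp
  have le: "1 / real d \<le> 1 / (real ((2*\<gamma>-3)*(2*\<kappa>-3)) - 2)"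
    unfolding d(1) using d(2) by (simp add: frac_le)
  from moser_tardos_binomial_bound[OF Z cs _ le crit] show ?thesis by simp
qed

lemma moser_tardos_local_case:
  assumes Z: "Z \<ge> 1" and cs: "set cs = C4 \<gamma> \<kappa>" and \<gamma>\<kappa>: "\<gamma> \<ge> 2" "\<kappa> \<ge> 2" "\<gamma> * \<kappa> > \<gamma> + \<kappa>"
    and p: "cycle_prob m Z \<le> 27 / (256 * real (\<gamma> * \<kappa> - \<gamma> - \<kappa>))"
  shows "(AE \<omega> in table_space m Z. mt_terminates Z cs \<omega> \<and> (\<forall>c\<in>C4 \<gamma> \<kappa>. \<not> active Z (mt_output Z cs \<omega>) c))
    \<and> (\<Sum>c\<in>C4 \<gamma> \<kappa>. \<integral>\<^sup>+ \<omega>. resample_count Z cs \<omega> c \<partial>table_space m Z)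
      \<le> ennreal (real (\<gamma> choose 2) * real (\<kappa> choose 2) / (3 * real (\<gamma> * \<kappa> - \<gamma> - \<kappa>) - 1))"
proof -
  let ?N = "\<gamma> * \<kappa> - \<gamma> - \<kappa>"
  have N: "?N \<ge> 1" using \<gamma>\<kappa>(3) by simp
  have five: "\<gamma> + \<kappa> \<ge> 5"
  proof (rule ccontr)
    assume "\<not> \<gamma> + \<kappa> \<ge> 5"
    then have "\<gamma> = 2" "\<kappa> = 2" using \<gamma>\<kappa>(1,2) by auto
    then show False using \<gamma>\<kappa>(3) by simp
  qed
  have crit: "cluster_criterion (C4 \<gamma> \<kappa>) (cycle_prob m Z) (1 / (3 * real ?N))"
    by (rule cluster_criterion_local[OF _ _ \<gamma>\<kappa>(1,2) five local_key_inequality[OF N p]])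
      (simp_all add: cycle_prob_def)
  have le: "1 / (3 * real ?N) \<le> 1 / (3 * real ?N - 1)"
  proof -
    have "1 / (3 * x) \<le> 1 / (3 * x - 1)" if "x \<ge> 1" for x :: real
      using that by (intro divide_left_mono) auto
    moreover have "real (1::nat) \<le> real ?N" by (rule of_nat_mono[OF N])
    then have "1 \<le> real ?N" by (simp only: of_nat_1)
    ultimately show ?thesis by blast
  qed
  from moser_tardos_binomial_bound[OF Z cs _ le crit] show ?thesis by simp
qed

theorem corollary2:
  fixes \<gamma> \<kappa> m L Z :: nat and cs :: "cand list"
  assumes "\<gamma> \<ge> 2" and "\<kappa> \<ge> 2" and "L \<ge> m + 1" and "Z \<ge> 1"
    and "\<gamma> * \<kappa> > \<gamma> + \<kappa>"
    and "distinct cs" and "set cs = C4 \<gamma> \<kappa>"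
    and "(2 * real m ^ 2 + 4 * real m + 3) / (3 * (real m + 1) ^ 3 * real Z) \<le>
         max (real ((2*\<gamma>-3)*(2*\<kappa>-3) - 1) ^ ((2*\<gamma>-3)*(2*\<kappa>-3) - 1)
                / real ((2*\<gamma>-3)*(2*\<kappa>-3)) ^ ((2*\<gamma>-3)*(2*\<kappa>-3)))
             (27 / (256 * real (\<gamma>*\<kappa> - \<gamma> - \<kappa>)))"
  shows "(AE \<omega> in table_space m Z. mt_terminates Z cs \<omega> \<and>
            (\<forall>c\<in>C4 \<gamma> \<kappa>. \<not> active Z (mt_output Z cs \<omega>) c))
       \<and> (\<Sum>c\<in>C4 \<gamma> \<kappa>. \<integral>\<^sup>+ \<omega>. resample_count Z cs \<omega> c \<partial>table_space m Z)
           \<le> ennreal (if real ((2*\<gamma>-3)*(2*\<kappa>-3) - 1) ^ ((2*\<gamma>-3)*(2*\<kappa>-3) - 1)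
                          / real ((2*\<gamma>-3)*(2*\<kappa>-3)) ^ ((2*\<gamma>-3)*(2*\<kappa>-3))
                        > 27 / (256 * real (\<gamma>*\<kappa> - \<gamma> - \<kappa>))
                     then real (\<gamma> choose 2) * real (\<kappa> choose 2)
                          / (real ((2*\<gamma>-3)*(2*\<kappa>-3)) - 2)
                     else real (\<gamma> choose 2) * real (\<kappa> choose 2)
                          / (3 * real (\<gamma>*\<kappa> - \<gamma> - \<kappa>) - 1))"
proof -
  let ?\<Delta> = "(2*\<gamma>-3)*(2*\<kappa>-3)"
  let ?I = "real (?\<Delta> - 1) ^ (?\<Delta> - 1) / real ?\<Delta> ^ ?\<Delta>" and ?II = "27 / (256 * real (\<gamma>*\<kappa> - \<gamma> - \<kappa>))"
  have p: "cycle_prob m Z \<le> max ?I ?II" using cycle_prob_le[OF assms(4), of m] assms(8) by linarith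
  show ?thesis
  proof (cases "?I > ?II")
    case True
    then show ?thesis using moser_tardos_degree_case[OF assms(4,7,1,2,5)] p by simp
  next
    case False
    then show ?thesis using moser_tardos_local_case[OF assms(4,7,1,2,5)] p by simp
  qed
qed

end
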